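(* Assume (A1) $X$ is $C^\infty$; (A2) $\sigma_{\min}\big[\int_{\mathcal{R}}\frac{\rho}{\Delta t^2}\frac{\partial X}{\partial\theta}(x,\theta_-)^T\frac{\partial X}{\partial\theta}(x,\theta_-)\,dx\big]\ge\sigma_X>0$; (A3) for every $x\in\mathcal{C}$, $\partial^3 v_x/\partial\theta^3$ exists and is continuous. Then there exist $r>0$ and an $\alpha$-independent constant $M_V>0$ such that for every $\beta\in(0,1]$ there is $\alpha_3(\beta)>0$ with the following property: for every $\alpha\in(0,\alpha_3(\beta)]$, the first-order PGM generates a sequence $\{(\theta^k,w^k)\}$ such that (1) $V_\alpha(\theta^k,w^k)\le M_V$ for all $k$; (2) $\theta^k\in\mathcal{B}(\theta_-,r\beta/2)$ for all $k$; (3) each manifold projection converges at a rate of at least $3/4$, i.e. every projection update $\theta\mapsto\theta^+$ satisfies $V_\alpha(\theta^+,w)\le\frac34V_\alpha(\theta,w)$.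
   Context: Setting. $\theta\in\mathbb{R}^n$; robot region $\mathcal{R}\subset\mathbb{R}^3$ with density $\rho>0$; forward kinematics $X(x,\theta)\in\mathbb{R}^3$; finite contact set $\mathcal{C}\subset\mathcal{R}$; for $x\in\mathcal{C}$, $v_x:\mathbb{R}^n\to\mathbb{R}^{3\times V_x}$ and $w_x\in\mathbb{R}^{V_x}$; $w$ is the concatenation, feasible if $w_x\ge0$ and $\mathbf{1}^Tw_x\le1$ for every $x$. Fixed data $\Delta t>0$, $\theta_-,\theta_{--},\tau\in\mathbb{R}^n$, $\alpha\in(0,1]$. $A(\theta)=\int_{\mathcal{R}}\frac{\rho}{\Delta t^2}\frac{\partial X}{\partial\theta}(x,\theta)^T(X(x,\theta)-X(x,\theta_-))dx$, $B(\theta,w)=\int_{\mathcal{R}}\frac{\rho}{\Delta t^2}\frac{\partial X}{\partial\theta}(x,\theta)^T(X(x,\theta_{--})-X(x,\theta_-))dx-\sum_{x\in\mathcal{C}}\frac{\partial X}{\partial\theta}(x,\theta)^Tv_x(\theta)w_x-\tau$, $G_\alpha=\frac1\alpha A+B$, $V_\alpha(\theta,w)=\|G_\alpha(\theta,w)\|^2$, $K(\theta)=\int_{\mathcal{R}}\frac{\rho\|X(x,\theta)-X(x,\theta_-)\|^2}{2\Delta t^2}dx$. $\mathcal{B}(\theta_-,s)$ is the closed ball of radius $s$ about $\theta_-$. First-order PGM. Fix $\eta>1$, $\epsilon>0$. Manifold projection of $\theta$ for a given $w$: repeat $\theta\leftarrow\theta^+:=\theta-\frac{\partial G_\alpha}{\partial\theta}(\theta,w)^{-1}G_\alpha(\theta,w)$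 while $\|G_\alpha(\theta,w)\|\ne0$. Initialize $w^0=0$, $\theta^0=\theta_-$, $\gamma=1$, and project $\theta^0$ with $w^0$. For $k=1,2,\dots$: with $J=\frac{\partial G_\alpha}{\partial\theta}^{-1}\frac{\partial G_\alpha}{\partial w}$ at $(\theta^{k-1},w^{k-1})$, let $\Delta w$ minimize $-\nabla K(\theta^{k-1})^TJ\Delta w+\frac12\Delta w^TJ^T\nabla^2K(\theta^{k-1})J\Delta w+\|\Delta w\|^2/\gamma$ subject to $w^{k-1}+\Delta w$ feasible; set $w^k=w^{k-1}+\Delta w$, $\theta^k=\theta^{k-1}$, and project $\theta^k$ with $w^k$. If $K(\theta^k)>K(\theta^{k-1})$, set $\gamma\leftarrow\eta\gamma$, $\theta^k\leftarrow\theta^{k-1}$, $w^k\leftarrow w^{k-1}$; otherwise $\gamma\leftarrow\gamma/\eta$, returning if $\|\theta^k-\theta^{k-1}\|_\infty<\epsilon$. *)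

theory Defs
  imports "HOL-Analysis.Analysis" "HOL-Library.Extended_Nat"
begin

section \<open>Smoothness classes (via iterated Frechet directional derivatives)\<close>

fun iter_dir :: "('a::real_normed_vector \<Rightarrow> 'b::real_normed_vector) \<Rightarrow> 'a list \<Rightarrow> 'a \<Rightarrow> 'b" where
  "iter_dir f [] = f"
| "iter_dir f (u # us) = (\<lambda>x. frechet_derivative (iter_dir f us) (at x) u)"

definition Ck_on :: "nat \<Rightarrow> 'a::real_normed_vector set \<Rightarrow> ('a \<Rightarrow> 'b::real_normed_vector) \<Rightarrow> bool" where
  "Ck_on k U f \<longleftrightarrow> open U \<and>
     (\<forall>us. length us < k \<longrightarrow> (\<forall>x\<in>U. iter_dir f us differentiable (at x))) \<and>
     (\<forall>us. length us \<le> k \<longrightarrow> continuous_on U (iter_dir f us))"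

definition smooth_on :: "'a::real_normed_vector set \<Rightarrow> ('a \<Rightarrow> 'b::real_normed_vector) \<Rightarrow> bool" where
  "smooth_on U f \<longleftrightarrow> (\<forall>k. Ck_on k U f)"

definition sigma_min :: "real^'n^'n \<Rightarrow> real" where
  "sigma_min M = Inf {norm (M *v u) | u. norm u = 1}"

text \<open>Contact forces: for a contact point x in C, the matrix v_x(theta) has columns
  rv x theta j (j < V x); the weights w_x are w x j (j < V x).\<close>
record ('n::finite) robot =
  rX    :: "real^3 \<Rightarrow> real^'n \<Rightarrow> real^3"   (* forward kinematics X(x,theta) *)
  rho   :: "real^3 \<Rightarrow> real"
  rR    :: "(real^3) set"                     (* robot region *)
  rC    :: "(real^3) set"                     (* contact set *)
  rV    :: "real^3 \<Rightarrow> nat"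
  rv    :: "real^3 \<Rightarrow> real^'n \<Rightarrow> nat \<Rightarrow> real^3"  (* columns of v_x(theta) *)
  dt    :: real
  thm1  :: "real^'n"                          (* theta_- *)
  thm2  :: "real^'n"                          (* theta_-- *)
  tau   :: "real^'n"

type_synonym weights = "real^3 \<Rightarrow> nat \<Rightarrow> real"

definition DX :: "('n::finite) robot \<Rightarrow> real^3 \<Rightarrow> real^'n \<Rightarrow> real^'n^3" where
  "DX P x \<theta> = jacobian (rX P x) (at \<theta>)"

definition Aop :: "('n::finite) robot \<Rightarrow> real^'n \<Rightarrow> real^'n" where
  "Aop P \<theta> = integral (rR P) (\<lambda>x. (rho P x / (dt P)\<^sup>2) *\<^sub>R
       (transpose (DX P x \<theta>) *v (rX P x \<theta> - rX P x (thm1 P))))"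

definition Fc :: "('n::finite) robot \<Rightarrow> real^'n \<Rightarrow> weights \<Rightarrow> real^'n" where
  "Fc P \<theta> w = (\<Sum>x\<in>rC P. \<Sum>j<rV P x. w x j *\<^sub>R (transpose (DX P x \<theta>) *v rv P x \<theta> j))"

definition Bop :: "('n::finite) robot \<Rightarrow> real^'n \<Rightarrow> weights \<Rightarrow> real^'n" where
  "Bop P \<theta> w = integral (rR P) (\<lambda>x. (rho P x / (dt P)\<^sup>2) *\<^sub>R
       (transpose (DX P x \<theta>) *v (rX P x (thm2 P) - rX P x (thm1 P)))) - Fc P \<theta> w - tau P"

definition Gop :: "('n::finite) robot \<Rightarrow> real \<Rightarrow> real^'n \<Rightarrow> weights \<Rightarrow> real^'n" where
  "Gop P \<alpha> \<theta> w = (1 / \<alpha>) *\<^sub>R Aop P \<theta> + Bop P \<theta> w"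

definition Vop :: "('n::finite) robot \<Rightarrow> real \<Rightarrow> real^'n \<Rightarrow> weights \<Rightarrow> real" where
  "Vop P \<alpha> \<theta> w = (norm (Gop P \<alpha> \<theta> w))\<^sup>2"

definition Kop :: "('n::finite) robot \<Rightarrow> real^'n \<Rightarrow> real" where
  "Kop P \<theta> = integral (rR P) (\<lambda>x. rho P x * (norm (rX P x \<theta> - rX P x (thm1 P)))\<^sup>2 / (2 * (dt P)\<^sup>2))"

definition dGth :: "('n::finite) robot \<Rightarrow> real \<Rightarrow> real^'n \<Rightarrow> weights \<Rightarrow> real^'n \<Rightarrow> real^'n" where
  "dGth P \<alpha> \<theta> w = frechet_derivative (\<lambda>t. Gop P \<alpha> t w) (at \<theta>)"

text \<open>Partial derivative of G_alpha w.r.t. w applied to dw; G_alpha is affine in w,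
  with w entering only through - Fc.\<close>
definition dGw :: "('n::finite) robot \<Rightarrow> real^'n \<Rightarrow> weights \<Rightarrow> real^'n" where
  "dGw P \<theta> dw = - Fc P \<theta> dw"

definition dGth_ok :: "('n::finite) robot \<Rightarrow> real \<Rightarrow> real^'n \<Rightarrow> weights \<Rightarrow> bool" where
  "dGth_ok P \<alpha> \<theta> w \<longleftrightarrow> (\<lambda>t. Gop P \<alpha> t w) differentiable (at \<theta>) \<and> bij (dGth P \<alpha> \<theta> w)"

definition supp_ok :: "('n::finite) robot \<Rightarrow> weights \<Rightarrow> bool" where
  "supp_ok P w \<longleftrightarrow> (\<forall>x j. x \<notin> rC P \<or> rV P x \<le> j \<longrightarrow> w x j = 0)"

definition feasible :: "('n::finite) robot \<Rightarrow> weights \<Rightarrow> bool" where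
  "feasible P w \<longleftrightarrow> (\<forall>x\<in>rC P. (\<forall>j<rV P x. 0 \<le> w x j) \<and> (\<Sum>j<rV P x. w x j) \<le> 1)"

definition wnorm2 :: "('n::finite) robot \<Rightarrow> weights \<Rightarrow> real" where
  "wnorm2 P w = (\<Sum>x\<in>rC P. \<Sum>j<rV P x. (w x j)\<^sup>2)"

definition projection :: "('n::finite) robot \<Rightarrow> real \<Rightarrow> weights \<Rightarrow> real^'n \<Rightarrow> (nat \<Rightarrow> real^'n) \<Rightarrow> real^'n \<Rightarrow> bool" where
  "projection P \<alpha> w th0 th thstar \<longleftrightarrow> th 0 = th0 \<and>
     (\<forall>i. if Gop P \<alpha> (th i) w = 0 then th (Suc i) = th i
          else dGth_ok P \<alpha> (th i) w \<and>
               th (Suc i) = th i - inv (dGth P \<alpha> (th i) w) (Gop P \<alpha> (th i) w)) \<and>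
     th \<longlonglongrightarrow> thstar"

definition DK :: "('n::finite) robot \<Rightarrow> real^'n \<Rightarrow> real^'n \<Rightarrow> real" where
  "DK P \<theta> u = frechet_derivative (Kop P) (at \<theta>) u"

definition D2K :: "('n::finite) robot \<Rightarrow> real^'n \<Rightarrow> real^'n \<Rightarrow> real^'n \<Rightarrow> real" where
  "D2K P \<theta> u u' = frechet_derivative (\<lambda>t. DK P t u) (at \<theta>) u'"

definition Jmap :: "('n::finite) robot \<Rightarrow> real \<Rightarrow> real^'n \<Rightarrow> weights \<Rightarrow> weights \<Rightarrow> real^'n" where
  "Jmap P \<alpha> \<theta> w dw = inv (dGth P \<alpha> \<theta> w) (dGw P \<theta> dw)"

definition qp_obj :: "('n::finite) robot \<Rightarrow> real \<Rightarrow> real \<Rightarrow> real^'n \<Rightarrow> weights \<Rightarrow> weights \<Rightarrow> real" where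
  "qp_obj P \<alpha> \<gamma> \<theta> w dw =
     - DK P \<theta> (Jmap P \<alpha> \<theta> w dw)
     + 1/2 * D2K P \<theta> (Jmap P \<alpha> \<theta> w dw) (Jmap P \<alpha> \<theta> w dw)
     + wnorm2 P dw / \<gamma>"

definition qp_dom :: "('n::finite) robot \<Rightarrow> weights \<Rightarrow> weights set" where
  "qp_dom P w = {dw. supp_ok P dw \<and> feasible P (\<lambda>x j. w x j + dw x j)}"

text \<open>A run: th k, w k, gam k are the iterates and step parameter after iteration k
  (k = 0: initialisation); wt k, tht k are the tentative weights / projected configuration of
  iteration k >= 1; pr k is the Newton sequence of the projection performed in iteration k
  (pr 0: the initial projection). T is the iteration at which the method returns
  (infinity if it never returns).\<close>
definition pgm_run :: "('n::finite) robot \<Rightarrow> real \<Rightarrow> real \<Rightarrow> real \<Rightarrow>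
    (nat \<Rightarrow> real^'n) \<Rightarrow> (nat \<Rightarrow> weights) \<Rightarrow> (nat \<Rightarrow> real) \<Rightarrow>
    (nat \<Rightarrow> real^'n) \<Rightarrow> (nat \<Rightarrow> weights) \<Rightarrow> (nat \<Rightarrow> nat \<Rightarrow> real^'n) \<Rightarrow> enat \<Rightarrow> bool" where
  "pgm_run P \<alpha> \<eta> \<epsilon> th w gam tht wt pr T \<longleftrightarrow>
     w 0 = (\<lambda>x j. 0) \<and> gam 0 = 1 \<and>
     projection P \<alpha> (w 0) (thm1 P) (pr 0) (th 0) \<and>
     (\<forall>k. 1 \<le> k \<and> enat k \<le> T \<longrightarrow>
        dGth_ok P \<alpha> (th (k-1)) (w (k-1)) \<and>
        (let dw = (\<lambda>x j. wt k x j - w (k-1) x j) in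
          dw \<in> qp_dom P (w (k-1)) \<and>
          (\<forall>d\<in>qp_dom P (w (k-1)).
              qp_obj P \<alpha> (gam (k-1)) (th (k-1)) (w (k-1)) dw
                \<le> qp_obj P \<alpha> (gam (k-1)) (th (k-1)) (w (k-1)) d)) \<and>
        projection P \<alpha> (wt k) (th (k-1)) (pr k) (tht k) \<and>
        (if Kop P (tht k) > Kop P (th (k-1))
         then gam k = \<eta> * gam (k-1) \<and> th k = th (k-1) \<and> w k = w (k-1)
         else gam k = gam (k-1) / \<eta> \<and> th k = tht k \<and> w k = wt k)) \<and>
     (\<forall>k. 1 \<le> k \<and> enat k < T \<longrightarrow>
        \<not> (\<not> Kop P (tht k) > Kop P (th (k-1)) \<and> infnorm (tht k - th (k-1)) < \<epsilon>)) \<and>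
     (\<forall>k. T = enat k \<longrightarrow> 1 \<le> k \<and>
        \<not> Kop P (tht k) > Kop P (th (k-1)) \<and> infnorm (tht k - th (k-1)) < \<epsilon>)"

definition proj_w :: "(nat \<Rightarrow> weights) \<Rightarrow> (nat \<Rightarrow> weights) \<Rightarrow> nat \<Rightarrow> weights" where
  "proj_w w wt k = (if k = 0 then w 0 else wt k)"

end

theory Submission
  imports Defs
begin

text \<open>
  The map \<open>Aop P\<close> vanishes at \<open>thm1 P\<close>, and its derivative there is the inertia matrix, whose
  smallest singular value is at least \<open>\<sigma>X\<close>.  On a ball of fixed radius \<open>\<rho>0\<close> around \<open>thm1 P\<close>
  the Jacobian of \<open>Gop P \<alpha> _ w = (1/\<alpha>) Aop + Bop\<close> is therefore bounded below by \<open>\<sigma>X/(4\<alpha>)\<close>,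
  while its first-order remainder is only \<open>O(1/\<alpha>)\<close>.  For small \<open>\<alpha>\<close> the Newton-Kantorovich
  estimate then makes every step of a projection started with residual at most \<open>g0\<close> at least halve
  the residual, so \<open>Vop\<close> contracts by \<open>1/4 \<le> 3/4\<close>, and the projection converges to a zero of
  \<open>Gop\<close> within \<open>2 \<alpha> CB / \<sigma>X\<close> of \<open>thm1 P\<close>.  Each projection starts at the previous iterate, a
  zero of \<open>Gop\<close> for the previous weights; the weights enter \<open>Gop\<close> only through the contact term,
  which is bounded independently of \<open>\<alpha>\<close>, so the initial residual is indeed at most \<open>g0\<close> and
  \<open>MV = g0\<^sup>2\<close> works.  The smoothness hypotheses yield the uniform \<open>C\<^sup>1\<^sup>,\<^sup>1\<close> bounds on \<open>Aop\<close>,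
  \<open>Bop\<close> and \<open>Kop\<close> by differentiation under the integral sign.
\<close>

lemma linear_eq_sum_axis:
  fixes f :: "real^'n \<Rightarrow> 'b::real_vector"
  assumes "linear f"
  shows "f u = (\<Sum>i\<in>UNIV. u$i *\<^sub>R f (axis i 1))"
proof -
  have "f u = f (\<Sum>i\<in>UNIV. u$i *\<^sub>R axis i 1)"
    using basis_expansion[of u] by (simp add: scalar_mult_eq_scaleR)
  also have "\<dots> = (\<Sum>i\<in>UNIV. u$i *\<^sub>R f (axis i 1))"
    using assms by (simp add: linear_sum linear_scale)
  finally show ?thesis .
qed

lemma norm_linear_le_sum_axis:
  fixes f :: "real^'n \<Rightarrow> 'b::real_normed_vector"
  assumes "linear f"
  shows "norm (f u) \<le> (\<Sum>i\<in>UNIV. norm (f (axis i 1))) * norm u"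
proof -
  have "norm (f u) \<le> (\<Sum>i\<in>UNIV. norm (u$i *\<^sub>R f (axis i 1)))"
    unfolding linear_eq_sum_axis[OF assms, of u] by (rule norm_sum)
  also have "\<dots> \<le> (\<Sum>i\<in>UNIV. norm u * norm (f (axis i 1)))"
    by (intro sum_mono) (simp add: component_le_norm_cart mult_right_mono)
  finally show ?thesis by (simp add: sum_distrib_left mult.commute)
qed

lemma norm_linear_le_of_axis_bound:
  fixes f :: "real^'n \<Rightarrow> 'b::real_normed_vector"
  assumes "linear f" and "\<And>k. norm (f (axis k 1)) \<le> M"
  shows "norm (f u) \<le> real CARD('n) * M * norm u"
proof -
  have "(\<Sum>i\<in>UNIV. norm (f (axis i 1))) \<le> real CARD('n) * M"
    using sum_mono[of UNIV "\<lambda>i. norm (f (axis i 1))" "\<lambda>_. M"] assms(2) by simp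
  then show ?thesis
    using norm_linear_le_sum_axis[OF assms(1), of u] by (meson mult_right_mono norm_ge_zero order_trans)
qed

lemma linear_bij_of_norm_lower_bound:
  fixes f :: "'a::euclidean_space \<Rightarrow> 'a"
  assumes "linear f" and "\<And>v. m * norm v \<le> norm (f v)" and "m > 0"
  shows "bij f"
proof -
  have "inj f"
  proof (rule linear_injective_0[THEN iffD2, OF assms(1)], intro allI impI)
    fix v assume "f v = 0"
    then have "m * norm v \<le> 0" using assms(2)[of v] by simp
    then show "v = 0" using assms(3) by (simp add: mult_le_0_iff)
  qed
  then show ?thesis using linear_inj_imp_surj[OF assms(1)] by (simp add: bij_def)
qed

lemma lipschitz_of_derivative_bound:
  fixes g :: "'a::real_normed_vector \<Rightarrow> 'b::real_normed_vector"
  assumes "convex S" and "\<And>t. t \<in> S \<Longrightarrow> (g has_derivative g' t) (at t)"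
    and "\<And>t v. t \<in> S \<Longrightarrow> norm (g' t v) \<le> K * norm v" and "K \<ge> 0"
    and "t \<in> S" and "s \<in> S"
  shows "norm (g t - g s) \<le> K * norm (t - s)"
proof (rule differentiable_bound[OF assms(1) _ _ assms(5,6)])
  show "(g has_derivative g' x) (at x within S)" if "x \<in> S" for x
    using assms(2)[OF that] has_derivative_at_withinI by blast
  show "onorm (g' x) \<le> K" if "x \<in> S" for x
    by (rule onorm_bound) (use assms(3,4) that in auto)
qed

lemma remainder_le_of_lipschitz_derivative:
  fixes g :: "'a::real_normed_vector \<Rightarrow> 'b::real_normed_vector"
  assumes S: "convex S" and d: "\<And>t. t \<in> S \<Longrightarrow> (g has_derivative g' t) (at t)"
    and lip: "\<And>t s v. t \<in> S \<Longrightarrow> s \<in> S \<Longrightarrow> norm (g' t v - g' s v) \<le> L * norm (t - s) * norm v"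
    and t: "t \<in> S" and t': "t' \<in> S" and L: "L \<ge> 0"
  shows "norm (g t' - g t - g' t (t' - t)) \<le> L * (norm (t' - t))\<^sup>2"
proof -
  define T where "T = closed_segment t t'"
  have TS: "T \<subseteq> S" using S t t' by (simp add: T_def closed_segment_subset)
  have lin: "bounded_linear (g' t)" using d[OF t] has_derivative_bounded_linear by blast
  have "((\<lambda>z. g z - g' t z) has_derivative (\<lambda>v. g' z v - g' t v)) (at z within T)" if "z \<in> T" for z
    using d TS that lin
    by (intro has_derivative_diff bounded_linear_imp_has_derivative) (auto intro: has_derivative_at_withinI)
  moreover have "onorm (\<lambda>v. g' z v - g' t v) \<le> L * norm (t' - t)" if "z \<in> T" for z
  proof (rule onorm_bound)
    fix v :: 'a
    have "norm (z - t) \<le> norm (t' - t)" using that unfolding T_def by (rule segment_bound1)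
    then have "L * norm (z - t) * norm v \<le> L * norm (t' - t) * norm v"
      using L by (simp add: mult_mono mult_right_mono)
    then show "norm (g' z v - g' t v) \<le> L * norm (t' - t) * norm v"
      using lip[of z t v] TS that t by fastforce
  qed (use L in simp)
  ultimately have "norm ((g t' - g' t t') - (g t - g' t t)) \<le> L * norm (t' - t) * norm (t' - t)"
    by (intro differentiable_bound[of T]) (auto simp: T_def)
  moreover have "(g t' - g' t t') - (g t - g' t t) = g t' - g t - g' t (t' - t)"
    using lin by (simp add: linear_diff bounded_linear.linear algebra_simps)
  ultimately show ?thesis by (simp add: power2_eq_square mult.assoc)
qed

lemma has_derivative_partial_snd:
  assumes "g differentiable (at (x, t))"
  shows "((\<lambda>s. g (x, s)) has_derivative (\<lambda>v. frechet_derivative g (at (x, t)) (0, v))) (at t)"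
proof -
  have "((\<lambda>s. (x, s)) has_derivative (\<lambda>v. (0, v))) (at t)"
    by (intro has_derivative_Pair has_derivative_const has_derivative_ident)
  from diff_chain_at[OF this, of g] assms show ?thesis
    by (simp add: o_def frechet_derivative_works)
qed

lemma transpose_jacobian_mult_vector:
  fixes f :: "real^'n \<Rightarrow> real^'m"
  assumes "(f has_derivative f') (at t)"
  shows "transpose (jacobian f (at t)) *v y = (\<Sum>i\<in>UNIV. inner (f' (axis i 1)) y *\<^sub>R axis i 1)"
proof -
  have axis_sum: "(\<Sum>i\<in>UNIV. (c i :: real) *\<^sub>R axis i 1) $ j = c j" for c j
    by (simp add: axis_def sum.delta if_distrib cong: if_cong)
  have "transpose (matrix f') *v y = (\<Sum>i\<in>UNIV. inner (f' (axis i 1)) y *\<^sub>R axis i 1)"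
    by (simp only: vec_eq_iff axis_sum)
       (simp add: matrix_vector_mult_def transpose_def matrix_def inner_vec_def mult.commute)
  then show ?thesis
    unfolding jacobian_def frechet_derivative_at[OF assms, symmetric] .
qed

lemma finite_family_uniformly_bounded:
  assumes "finite A" and "\<And>a. a \<in> A \<Longrightarrow> \<exists>M. \<forall>z\<in>Z a. norm (f a z :: 'b::real_normed_vector) \<le> M"
  shows "\<exists>M\<ge>0. \<forall>a\<in>A. \<forall>z\<in>Z a. norm (f a z) \<le> M"
proof -
  obtain Mf where Mf: "\<And>a z. a \<in> A \<Longrightarrow> z \<in> Z a \<Longrightarrow> norm (f a z) \<le> Mf a"
    using assms(2) by metis
  have "norm (f a z) \<le> (\<Sum>a\<in>A. \<bar>Mf a\<bar>)" if "a \<in> A" "z \<in> Z a" for a z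
    using Mf[OF that] member_le_sum[OF that(1), of "\<lambda>a. \<bar>Mf a\<bar>"] assms(1) by force
  then show ?thesis by (intro exI[of _ "\<Sum>a\<in>A. \<bar>Mf a\<bar>"]) (simp add: sum_nonneg)
qed

lemma integrable_bounded_measurable_scaleR_continuous:
  fixes h :: "'a::euclidean_space \<Rightarrow> 'b::euclidean_space"
  assumes S: "compact S" and r: "r measurable_on S" and rB: "\<forall>x\<in>S. \<bar>r x\<bar> \<le> B"
    and h: "continuous_on S h"
  shows "(\<lambda>x. r x *\<^sub>R h x) integrable_on S"
proof -
  have Sl: "S \<in> sets lebesgue" using lmeasurable_compact[OF S] fmeasurableD by blast
  obtain K where K: "\<And>x. x \<in> S \<Longrightarrow> norm (h x) \<le> K"
    using continuous_on_compact_bound[OF S h] by blast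
  have "(\<lambda>x. r x *\<^sub>R h x) absolutely_integrable_on S"
  proof (rule measurable_bounded_by_integrable_imp_absolutely_integrable[OF _ Sl])
    show "(\<lambda>x. r x *\<^sub>R h x) \<in> borel_measurable (lebesgue_on S)"
      using r h Sl by (intro borel_measurable_scaleR)
        (simp_all add: measurable_on_iff_borel_measurable continuous_imp_measurable_on_sets_lebesgue)
    show "(\<lambda>x. B * K) integrable_on S" using integrable_on_const lmeasurable_compact S by blast
    show "norm (r x *\<^sub>R h x) \<le> B * K" if "x \<in> S" for x
      using rB K that by (simp add: mult_mono')
  qed
  then show ?thesis using absolutely_integrable_on_def by blast
qed

lemma integrable_bounded_measurable:
  fixes r :: "'a::euclidean_space \<Rightarrow> real"
  assumes "compact S" and "r measurable_on S" and "\<forall>x\<in>S. \<bar>r x\<bar> \<le> B"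
  shows "r integrable_on S"
  using integrable_bounded_measurable_scaleR_continuous[OF assms, of "\<lambda>x. 1::real"] by simp

lemma norm_integral_scaleR_le:
  fixes h :: "'a::euclidean_space \<Rightarrow> 'b::euclidean_space"
  assumes S: "compact S" and r: "r measurable_on S" and rB: "\<forall>x\<in>S. 0 \<le> r x \<and> r x \<le> B"
    and h: "continuous_on S h" and hK: "\<forall>x\<in>S. norm (h x) \<le> K"
  shows "norm (integral S (\<lambda>x. r x *\<^sub>R h x)) \<le> K * integral S r"
proof -
  have rB': "\<forall>x\<in>S. \<bar>r x\<bar> \<le> B" using rB by auto
  have ri: "r integrable_on S" by (rule integrable_bounded_measurable[OF S r rB'])
  have "norm (integral S (\<lambda>x. r x *\<^sub>R h x)) \<le> integral S (\<lambda>x. K * r x)"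
  proof (rule integral_norm_bound_integral)
    show "(\<lambda>x. r x *\<^sub>R h x) integrable_on S"
      by (rule integrable_bounded_measurable_scaleR_continuous[OF S r rB' h])
    show "(\<lambda>x. K * r x) integrable_on S" using integrable_cmul[OF ri, of K] by simp
    show "norm (r x *\<^sub>R h x) \<le> K * r x" if "x \<in> S" for x
      using rB hK that mult_left_mono[of "norm (h x)" K "r x"] by (simp add: mult.commute)
  qed
  also have "\<dots> = K * integral S r" using integral_mult[OF ri, of K] by simp
  finally show ?thesis .
qed

lemma bounded_linear_integral_scaleR:
  fixes g :: "'a::euclidean_space \<Rightarrow> 'c::euclidean_space \<Rightarrow> 'b::euclidean_space"
  assumes S: "compact S" and r: "r measurable_on S" and rB: "\<forall>x\<in>S. 0 \<le> r x \<and> r x \<le> B"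
    and cont: "\<And>v. continuous_on S (\<lambda>x. g x v)"
    and lin: "\<And>x. x \<in> S \<Longrightarrow> linear (g x)"
    and bd: "\<And>x v. x \<in> S \<Longrightarrow> norm (g x v) \<le> C * norm v"
  shows "bounded_linear (\<lambda>v. integral S (\<lambda>x. r x *\<^sub>R g x v))"
proof (rule bounded_linear_intro)
  have rB': "\<forall>x\<in>S. \<bar>r x\<bar> \<le> B" using rB by auto
  have int: "(\<lambda>x. r x *\<^sub>R g x v) integrable_on S" for v
    by (rule integrable_bounded_measurable_scaleR_continuous[OF S r rB' cont])
  fix a b
  have "integral S (\<lambda>x. r x *\<^sub>R g x (a + b)) = integral S (\<lambda>x. r x *\<^sub>R g x a + r x *\<^sub>R g x b)"
    by (rule integral_cong) (simp add: lin linear_add scaleR_add_right)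
  also have "\<dots> = integral S (\<lambda>x. r x *\<^sub>R g x a) + integral S (\<lambda>x. r x *\<^sub>R g x b)"
    by (rule integral_add[OF int int])
  finally show "integral S (\<lambda>x. r x *\<^sub>R g x (a + b))
      = integral S (\<lambda>x. r x *\<^sub>R g x a) + integral S (\<lambda>x. r x *\<^sub>R g x b)" .
next
  fix c a
  have "integral S (\<lambda>x. r x *\<^sub>R g x (c *\<^sub>R a)) = integral S (\<lambda>x. c *\<^sub>R (r x *\<^sub>R g x a))"
    by (rule integral_cong) (simp add: lin linear_scale)
  then show "integral S (\<lambda>x. r x *\<^sub>R g x (c *\<^sub>R a)) = c *\<^sub>R integral S (\<lambda>x. r x *\<^sub>R g x a)"
    by (metis integral_cmul)
next
  fix v
  have "norm (integral S (\<lambda>x. r x *\<^sub>R g x v)) \<le> (C * norm v) * integral S r"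
    by (rule norm_integral_scaleR_le[OF S r rB cont]) (simp add: bd)
  then show "norm (integral S (\<lambda>x. r x *\<^sub>R g x v)) \<le> norm v * (C * integral S r)"
    by (simp add: algebra_simps)
qed

lemma has_derivative_of_quadratic_remainder:
  assumes bl: "bounded_linear f'" and T: "open T" "t \<in> T"
    and rem: "\<And>y. y \<in> T \<Longrightarrow> norm (f y - f t - f' (y - t)) \<le> K * (norm (y - t))\<^sup>2"
  shows "(f has_derivative f') (at t)"
  unfolding has_derivative_at_alt
proof (intro conjI allI impI bl)
  fix e :: real assume e: "e > 0"
  obtain d0 where d0: "d0 > 0" "ball t d0 \<subseteq> T" using T open_contains_ball by blast
  have K1: "\<bar>K\<bar> + 1 > 0" by simp
  define d where "d = min d0 (e / (\<bar>K\<bar> + 1))"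
  have d: "d > 0" using d0 e K1 by (simp add: d_def)
  show "\<exists>d>0. \<forall>y. norm (y - t) < d \<longrightarrow> norm (f y - f t - f' (y - t)) \<le> e * norm (y - t)"
  proof (intro exI[of _ d] conjI allI impI d)
    fix y assume y: "norm (y - t) < d"
    then have "y \<in> T" using d0 by (auto simp: d_def dist_norm norm_minus_commute)
    then have "norm (f y - f t - f' (y - t)) \<le> K * (norm (y - t))\<^sup>2" by (rule rem)
    also have "\<dots> \<le> \<bar>K\<bar> * (norm (y - t))\<^sup>2" by (intro mult_right_mono) auto
    also have "\<dots> = (\<bar>K\<bar> * norm (y - t)) * norm (y - t)" by (simp add: power2_eq_square)
    also have "\<dots> \<le> e * norm (y - t)"
    proof (rule mult_right_mono)
      have "\<bar>K\<bar> * norm (y - t) \<le> (\<bar>K\<bar> + 1) * (e / (\<bar>K\<bar> + 1))"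
        using y by (intro mult_mono) (auto simp: d_def)
      then show "\<bar>K\<bar> * norm (y - t) \<le> e" using K1 by simp
    qed simp
    finally show "norm (f y - f t - f' (y - t)) \<le> e * norm (y - t)" .
  qed
qed

lemma has_derivative_integral_scaleR:
  fixes h :: "'a::euclidean_space \<Rightarrow> 'c::euclidean_space \<Rightarrow> 'b::euclidean_space"
  assumes S: "compact S" and r: "r measurable_on S" and rB: "\<forall>x\<in>S. 0 \<le> r x \<and> r x \<le> B"
    and T: "open T" and t: "t \<in> T"
    and ch: "\<And>t. t \<in> T \<Longrightarrow> continuous_on S (\<lambda>x. h x t)"
    and ch': "\<And>v. continuous_on S (\<lambda>x. h' x t v)"
    and lin: "\<And>x. x \<in> S \<Longrightarrow> linear (h' x t)"
    and bd: "\<And>x v. x \<in> S \<Longrightarrow> norm (h' x t v) \<le> C * norm v"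
    and rem: "\<And>x t'. x \<in> S \<Longrightarrow> t' \<in> T \<Longrightarrow> norm (h x t' - h x t - h' x t (t' - t)) \<le> L * (norm (t' - t))\<^sup>2"
  shows "((\<lambda>t. integral S (\<lambda>x. r x *\<^sub>R h x t)) has_derivative
           (\<lambda>v. integral S (\<lambda>x. r x *\<^sub>R h' x t v))) (at t)"
proof (rule has_derivative_of_quadratic_remainder[OF _ T t])
  show "bounded_linear (\<lambda>v. integral S (\<lambda>x. r x *\<^sub>R h' x t v))"
    by (rule bounded_linear_integral_scaleR[where g="\<lambda>x. h' x t", OF S r rB ch' lin bd])
  have rB': "\<forall>x\<in>S. \<bar>r x\<bar> \<le> B" using rB by auto
  fix y assume y: "y \<in> T"
  have "integral S (\<lambda>x. r x *\<^sub>R h x y) - integral S (\<lambda>x. r x *\<^sub>R h x t)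
        - integral S (\<lambda>x. r x *\<^sub>R h' x t (y - t))
      = integral S (\<lambda>x. r x *\<^sub>R (h x y - h x t - h' x t (y - t)))"
    using integrable_bounded_measurable_scaleR_continuous[OF S r rB' ch[OF y]]
      integrable_bounded_measurable_scaleR_continuous[OF S r rB' ch[OF t]]
      integrable_bounded_measurable_scaleR_continuous[OF S r rB' ch'[of "y - t"]]
    by (simp add: integral_diff integrable_diff scaleR_diff_right)
  also have "norm \<dots> \<le> (L * (norm (y - t))\<^sup>2) * integral S r"
  proof (rule norm_integral_scaleR_le[OF S r rB])
    show "continuous_on S (\<lambda>x. h x y - h x t - h' x t (y - t))"
      using ch[OF y] ch[OF t] ch' by (intro continuous_intros)
    show "\<forall>x\<in>S. norm (h x y - h x t - h' x t (y - t)) \<le> L * (norm (y - t))\<^sup>2"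
      using rem y by blast
  qed
  finally show "norm (integral S (\<lambda>x. r x *\<^sub>R h x y) - integral S (\<lambda>x. r x *\<^sub>R h x t)
      - integral S (\<lambda>x. r x *\<^sub>R h' x t (y - t))) \<le> L * integral S r * (norm (y - t))\<^sup>2"
    by (simp add: algebra_simps)
qed

lemma has_derivative_iter_dir:
  assumes "iter_dir f us differentiable (at t)"
  shows "(iter_dir f us has_derivative (\<lambda>v. iter_dir f (v # us) t)) (at t)"
  using assms by (simp add: frechet_derivative_works)

lemma has_derivative_iter_dir_snd:
  assumes "iter_dir f us differentiable (at (x, t))"
  shows "((\<lambda>s. iter_dir f us (x, s)) has_derivative (\<lambda>v. iter_dir f ((0, v) # us) (x, t))) (at t)"
  using has_derivative_partial_snd[OF assms] by simp

lemma Ck_on_iter_dir_bounded: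
  assumes f: "Ck_on k U f" and K: "compact K" "K \<subseteq> U" and D: "finite D"
  shows "\<exists>M\<ge>0. \<forall>us\<in>{us. set us \<subseteq> D \<and> length us \<le> k}. \<forall>z\<in>K. norm (iter_dir f us z) \<le> M"
proof (rule finite_family_uniformly_bounded)
  show "finite {us. set us \<subseteq> D \<and> length us \<le> k}" using D by (rule finite_lists_length_le)
  fix us assume "us \<in> {us. set us \<subseteq> D \<and> length us \<le> k}"
  then have "continuous_on K (iter_dir f us)"
    using f K(2) unfolding Ck_on_def by (blast intro: continuous_on_subset)
  then show "\<exists>M. \<forall>z\<in>K. norm (iter_dir f us z) \<le> M" using continuous_on_compact_bound[OF K(1)] by metis
qed

lemma bounded_linear_matrix_vector_mult_left: "bounded_linear (\<lambda>M::real^'n^'m. M *v v)"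
proof -
  have "linear (\<lambda>M::real^'n^'m. M *v v)"
    by (rule linearI) (simp_all add: vec_eq_iff matrix_vector_mult_def sum.distrib sum_distrib_left algebra_simps)
  then show ?thesis by (simp add: linear_conv_bounded_linear)
qed

lemma sigma_min_le: "norm u = 1 \<Longrightarrow> sigma_min M \<le> norm (M *v u)"
  unfolding sigma_min_def by (rule cInf_lower) (auto intro: bdd_belowI[of _ 0])

lemma sigma_min_mult_le: "sigma_min M * norm v \<le> norm (M *v v)"
proof (cases "v = 0")
  case False
  have "sigma_min M \<le> norm (M *v (v /\<^sub>R norm v))" using False by (intro sigma_min_le) simp
  also have "M *v (v /\<^sub>R norm v) = (v /\<^sub>R norm v) v* transpose M" by simp
  also have "norm \<dots> = norm (M *v v) / norm v"
    using False by (simp add: vector_scaleR_matrix_ac[symmetric] scaleR_matrix_vector_assoc[symmetric]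
        matrix_vector_mult_scaleR divide_inverse_commute)
  finally show ?thesis using False by (simp add: field_simps)
qed simp

lemma continuous_on_eval2: "continuous_on UNIV (\<lambda>dw :: 'a \<Rightarrow> 'b \<Rightarrow> 'c::topological_space. dw x j)"
proof -
  have "continuous_on UNIV ((\<lambda>g :: 'b \<Rightarrow> 'c. g j) \<circ> (\<lambda>dw :: 'a \<Rightarrow> 'b \<Rightarrow> 'c. dw x))"
    by (rule continuous_on_compose) (auto intro: continuous_on_subset[OF continuous_on_product_coordinates])
  then show ?thesis by (simp add: o_def)
qed

lemma compact_PiE_UNIV:
  assumes "\<And>i. compact (S i)"
  shows "compact (PiE UNIV S :: ('a \<Rightarrow> 'b::topological_space) set)"
proof -
  have "compactin (product_topology (\<lambda>i. euclidean) UNIV) (PiE UNIV S)"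
    using assms by (simp add: compactin_PiE)
  then show ?thesis by (simp add: euclidean_product_topology)
qed

lemma compact_functions_in_interval: "compact {f :: 'a \<Rightarrow> 'b \<Rightarrow> real. \<forall>x y. f x y \<in> {a..b}}"
proof -
  have "compact (PiE UNIV (\<lambda>x::'a. PiE UNIV (\<lambda>y::'b. {a..b})))"
    by (intro compact_PiE_UNIV) simp
  moreover have "PiE UNIV (\<lambda>x::'a. PiE UNIV (\<lambda>y::'b. {a..b})) = {f. \<forall>x y. f x y \<in> {a..b}}"
    by (auto simp: PiE_UNIV_domain Pi_iff)
  ultimately show ?thesis by simp
qed

lemma first_hitting_time:
  assumes "T = (if \<exists>k. Q k then enat (LEAST k. Q k) else \<infinity>)"
  shows "enat k < T \<Longrightarrow> \<not> Q k" and "T = enat k \<Longrightarrow> Q k"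
proof -
  show "\<not> Q k" if "enat k < T"
    using that assms not_less_Least by (auto split: if_splits)
  show "Q k" if "T = enat k"
    using that assms by (auto split: if_splits intro: LeastI)
qed

section \<open>Uniformly \<open>C\<^sup>1\<^sup>,\<^sup>1\<close> families\<close>

definition uniform_C11 ::
    "'i set \<Rightarrow> 'a::real_normed_vector set \<Rightarrow> ('i \<Rightarrow> 'a \<Rightarrow> 'b::real_normed_vector) \<Rightarrow>
     ('i \<Rightarrow> 'a \<Rightarrow> 'a \<Rightarrow> 'b) \<Rightarrow> real \<Rightarrow> bool" where
  "uniform_C11 I S h h' C \<longleftrightarrow> C \<ge> 0 \<and>
     (\<forall>i\<in>I. \<forall>t\<in>S. (h i has_derivative h' i t) (at t)) \<and>
     (\<forall>i\<in>I. \<forall>t\<in>S. norm (h i t) \<le> C) \<and>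
     (\<forall>i\<in>I. \<forall>t\<in>S. \<forall>v. norm (h' i t v) \<le> C * norm v) \<and>
     (\<forall>i\<in>I. \<forall>t\<in>S. \<forall>s\<in>S. \<forall>v. norm (h' i t v - h' i s v) \<le> C * norm (t - s) * norm v)"

abbreviation C11_on :: "'a::real_normed_vector set \<Rightarrow> ('a \<Rightarrow> 'b::real_normed_vector) \<Rightarrow>
    ('a \<Rightarrow> 'a \<Rightarrow> 'b) \<Rightarrow> real \<Rightarrow> bool" where
  "C11_on S f f' C \<equiv> uniform_C11 (UNIV :: unit set) S (\<lambda>_. f) (\<lambda>_. f') C"

lemma uniform_C11_nonneg: "uniform_C11 I S h h' C \<Longrightarrow> C \<ge> 0"
  unfolding uniform_C11_def by blast

lemma uniform_C11_has_derivative: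
  "uniform_C11 I S h h' C \<Longrightarrow> i \<in> I \<Longrightarrow> t \<in> S \<Longrightarrow> (h i has_derivative h' i t) (at t)"
  unfolding uniform_C11_def by blast

lemma uniform_C11_bound: "uniform_C11 I S h h' C \<Longrightarrow> i \<in> I \<Longrightarrow> t \<in> S \<Longrightarrow> norm (h i t) \<le> C"
  unfolding uniform_C11_def by blast

lemma uniform_C11_derivative_bound:
  "uniform_C11 I S h h' C \<Longrightarrow> i \<in> I \<Longrightarrow> t \<in> S \<Longrightarrow> norm (h' i t v) \<le> C * norm v"
  unfolding uniform_C11_def by blast

lemma uniform_C11_derivative_lipschitz:
  "uniform_C11 I S h h' C \<Longrightarrow> i \<in> I \<Longrightarrow> t \<in> S \<Longrightarrow> s \<in> S \<Longrightarrow>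
     norm (h' i t v - h' i s v) \<le> C * norm (t - s) * norm v"
  unfolding uniform_C11_def by blast

lemma uniform_C11_lipschitz:
  assumes "uniform_C11 I S h h' C" and "convex S" and "i \<in> I" and "t \<in> S" and "s \<in> S"
  shows "norm (h i t - h i s) \<le> C * norm (t - s)"
  using assms by (intro lipschitz_of_derivative_bound[of S "h i" "h' i"])
    (auto intro: uniform_C11_has_derivative uniform_C11_derivative_bound uniform_C11_nonneg)

lemma uniform_C11_remainder:
  assumes "uniform_C11 I S h h' C" and "convex S" and "i \<in> I" and "t \<in> S" and "s \<in> S"
  shows "norm (h i s - h i t - h' i t (s - t)) \<le> C * (norm (s - t))\<^sup>2"
  using assms by (intro remainder_le_of_lipschitz_derivative[of S "h i" "h' i"])
    (auto intro: uniform_C11_has_derivative uniform_C11_derivative_lipschitz uniform_C11_nonneg)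

lemma uniform_C11_mono:
  assumes f: "uniform_C11 I S h h' C" and "C \<le> C'" and "J \<subseteq> I"
  shows "uniform_C11 J S h h' C'"
  unfolding uniform_C11_def
proof (intro conjI ballI allI)
  show "0 \<le> C'" using uniform_C11_nonneg[OF f] \<open>C \<le> C'\<close> by simp
  fix i t v assume i: "i \<in> J" and t: "t \<in> S"
  then have i': "i \<in> I" using \<open>J \<subseteq> I\<close> by blast
  show "(h i has_derivative h' i t) (at t)" using uniform_C11_has_derivative[OF f i' t] .
  show "norm (h i t) \<le> C'" using uniform_C11_bound[OF f i' t] \<open>C \<le> C'\<close> by simp
  show "norm (h' i t v) \<le> C' * norm v"
    using uniform_C11_derivative_bound[OF f i' t, of v] mult_right_mono[OF \<open>C \<le> C'\<close> norm_ge_zero[of v]]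
    by simp
  fix s assume s: "s \<in> S"
  have "C * norm (t - s) * norm v \<le> C' * norm (t - s) * norm v"
    using \<open>C \<le> C'\<close> by (simp add: mult_right_mono)
  then show "norm (h' i t v - h' i s v) \<le> C' * norm (t - s) * norm v"
    using uniform_C11_derivative_lipschitz[OF f i' t s, of v] by simp
qed

lemma uniform_C11_reindex:
  "uniform_C11 I S h h' C \<Longrightarrow> \<phi> ` J \<subseteq> I \<Longrightarrow> uniform_C11 J S (\<lambda>j. h (\<phi> j)) (\<lambda>j. h' (\<phi> j)) C"
  unfolding uniform_C11_def by (auto simp: image_subset_iff)

lemma uniform_C11_cong:
  assumes f: "uniform_C11 I S h h' C" and "\<And>i t. i \<in> I \<Longrightarrow> h i t = g i t"
    and "\<And>i t v. i \<in> I \<Longrightarrow> t \<in> S \<Longrightarrow> h' i t v = g' i t v"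
  shows "uniform_C11 I S g g' C"
  unfolding uniform_C11_def
proof (intro conjI ballI allI)
  show "0 \<le> C" using uniform_C11_nonneg[OF f] .
  fix i t v assume i: "i \<in> I" and t: "t \<in> S"
  have e1: "g i = h i" using assms(2)[OF i] by auto
  have e2: "g' i t = h' i t" using assms(3)[OF i t] by auto
  show "(g i has_derivative g' i t) (at t)" unfolding e1 e2 using uniform_C11_has_derivative[OF f i t] .
  show "norm (g i t) \<le> C" using uniform_C11_bound[OF f i t] e1 by simp
  show "norm (g' i t v) \<le> C * norm v" using uniform_C11_derivative_bound[OF f i t] e2 by simp
  fix s assume s: "s \<in> S"
  show "norm (g' i t v - g' i s v) \<le> C * norm (t - s) * norm v"
    using uniform_C11_derivative_lipschitz[OF f i t s] assms(3)[OF i t] assms(3)[OF i s] by simp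
qed

lemma uniform_C11_const:
  assumes "C \<ge> 0" and "\<And>i. i \<in> I \<Longrightarrow> norm (c i) \<le> C"
  shows "uniform_C11 I S (\<lambda>i t. c i) (\<lambda>i t v. 0) C"
  using assms unfolding uniform_C11_def by auto

lemma uniform_C11_add:
  assumes f: "uniform_C11 I S f f' C" and g: "uniform_C11 I S g g' C"
  shows "uniform_C11 I S (\<lambda>i t. f i t + g i t) (\<lambda>i t v. f' i t v + g' i t v) (2 * C)"
  unfolding uniform_C11_def
proof (intro conjI ballI allI)
  show "0 \<le> 2 * C" using uniform_C11_nonneg[OF f] by simp
  fix i t v assume i: "i \<in> I" and t: "t \<in> S"
  show "((\<lambda>s. f i s + g i s) has_derivative (\<lambda>v. f' i t v + g' i t v)) (at t)"
    by (intro has_derivative_add uniform_C11_has_derivative[OF f i t] uniform_C11_has_derivative[OF g i t])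
  show "norm (f i t + g i t) \<le> 2 * C"
    using uniform_C11_bound[OF f i t] uniform_C11_bound[OF g i t] norm_triangle_ineq[of "f i t" "g i t"]
    by linarith
  show "norm (f' i t v + g' i t v) \<le> 2 * C * norm v"
    using uniform_C11_derivative_bound[OF f i t, of v] uniform_C11_derivative_bound[OF g i t, of v]
      norm_triangle_ineq[of "f' i t v" "g' i t v"]
    by linarith
  fix s assume s: "s \<in> S"
  show "norm (f' i t v + g' i t v - (f' i s v + g' i s v)) \<le> 2 * C * norm (t - s) * norm v"
    using uniform_C11_derivative_lipschitz[OF f i t s, of v] uniform_C11_derivative_lipschitz[OF g i t s, of v]
      norm_triangle_ineq[of "f' i t v - f' i s v" "g' i t v - g' i s v"]
    by (simp add: algebra_simps)
qed

lemma uniform_C11_scaleR: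
  assumes f: "uniform_C11 I S f f' C"
  shows "uniform_C11 I S (\<lambda>i t. c *\<^sub>R f i t) (\<lambda>i t v. c *\<^sub>R f' i t v) (\<bar>c\<bar> * C)"
  unfolding uniform_C11_def
proof (intro conjI ballI allI)
  show "0 \<le> \<bar>c\<bar> * C" using uniform_C11_nonneg[OF f] by simp
  fix i t v assume i: "i \<in> I" and t: "t \<in> S"
  show "((\<lambda>s. c *\<^sub>R f i s) has_derivative (\<lambda>v. c *\<^sub>R f' i t v)) (at t)"
    by (intro has_derivative_scaleR_right uniform_C11_has_derivative[OF f i t])
  show "norm (c *\<^sub>R f i t) \<le> \<bar>c\<bar> * C"
    using uniform_C11_bound[OF f i t] by (simp add: mult_left_mono)
  show "norm (c *\<^sub>R f' i t v) \<le> \<bar>c\<bar> * C * norm v"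
    using uniform_C11_derivative_bound[OF f i t, of v] by (simp add: mult_left_mono mult.assoc)
  fix s assume s: "s \<in> S"
  have "norm (c *\<^sub>R f' i t v - c *\<^sub>R f' i s v) = \<bar>c\<bar> * norm (f' i t v - f' i s v)"
    by (metis norm_scaleR scaleR_diff_right)
  also have "\<dots> \<le> \<bar>c\<bar> * (C * norm (t - s) * norm v)"
    using uniform_C11_derivative_lipschitz[OF f i t s, of v] by (simp add: mult_left_mono)
  finally show "norm (c *\<^sub>R f' i t v - c *\<^sub>R f' i s v) \<le> \<bar>c\<bar> * C * norm (t - s) * norm v"
    by (simp add: mult.assoc)
qed

lemma uniform_C11_diff:
  assumes f: "uniform_C11 I S f f' C" and g: "uniform_C11 I S g g' C"
  shows "uniform_C11 I S (\<lambda>i t. f i t - g i t) (\<lambda>i t v. f' i t v - g' i t v) (2 * C)"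
proof -
  have "uniform_C11 I S (\<lambda>i t. (-1) *\<^sub>R g i t) (\<lambda>i t v. (-1) *\<^sub>R g' i t v) C"
    using uniform_C11_scaleR[OF g, of "-1"] by simp
  from uniform_C11_add[OF f this] show ?thesis by simp
qed

lemma uniform_C11_sum:
  assumes K: "finite K" and f: "\<And>k. k \<in> K \<Longrightarrow> uniform_C11 I S (f k) (f' k) C" and C: "C \<ge> 0"
  shows "uniform_C11 I S (\<lambda>i t. \<Sum>k\<in>K. f k i t) (\<lambda>i t v. \<Sum>k\<in>K. f' k i t v) (real (card K) * C)"
  unfolding uniform_C11_def
proof (intro conjI ballI allI)
  show "0 \<le> real (card K) * C" using C by simp
  fix i t v assume i: "i \<in> I" and t: "t \<in> S"
  show "((\<lambda>s. \<Sum>k\<in>K. f k i s) has_derivative (\<lambda>v. \<Sum>k\<in>K. f' k i t v)) (at t)"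
    by (intro has_derivative_sum uniform_C11_has_derivative[OF f i t])
  have "norm (\<Sum>k\<in>K. f k i t) \<le> (\<Sum>k\<in>K. C)"
    by (rule sum_norm_le) (metis uniform_C11_bound f i t)
  then show "norm (\<Sum>k\<in>K. f k i t) \<le> real (card K) * C" by simp
  have "norm (\<Sum>k\<in>K. f' k i t v) \<le> (\<Sum>k\<in>K. C * norm v)"
    by (rule sum_norm_le) (metis uniform_C11_derivative_bound f i t)
  then show "norm (\<Sum>k\<in>K. f' k i t v) \<le> real (card K) * C * norm v" by simp
  fix s assume s: "s \<in> S"
  have "norm ((\<Sum>k\<in>K. f' k i t v) - (\<Sum>k\<in>K. f' k i s v)) = norm (\<Sum>k\<in>K. f' k i t v - f' k i s v)"
    by (simp add: sum_subtractf)
  also have "\<dots> \<le> (\<Sum>k\<in>K. C * norm (t - s) * norm v)"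
    by (rule sum_norm_le) (metis uniform_C11_derivative_lipschitz f i t s)
  finally show "norm ((\<Sum>k\<in>K. f' k i t v) - (\<Sum>k\<in>K. f' k i s v)) \<le> real (card K) * C * norm (t - s) * norm v"
    by simp
qed

lemma uniform_C11_scaleR_left:
  assumes f: "uniform_C11 I S f f' C"
  shows "uniform_C11 I S (\<lambda>i t. f i t *\<^sub>R a) (\<lambda>i t v. f' i t v *\<^sub>R a) (C * norm a)"
  unfolding uniform_C11_def
proof (intro conjI ballI allI)
  show "0 \<le> C * norm a" using uniform_C11_nonneg[OF f] by simp
  fix i t v assume i: "i \<in> I" and t: "t \<in> S"
  show "((\<lambda>s. f i s *\<^sub>R a) has_derivative (\<lambda>v. f' i t v *\<^sub>R a)) (at t)"
    by (intro has_derivative_scaleR_left uniform_C11_has_derivative[OF f i t])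
  show "norm (f i t *\<^sub>R a) \<le> C * norm a"
    using uniform_C11_bound[OF f i t] by (simp add: mult_right_mono)
  show "norm (f' i t v *\<^sub>R a) \<le> C * norm a * norm v"
    using mult_right_mono[OF uniform_C11_derivative_bound[OF f i t, of v] norm_ge_zero[of a]]
    by (simp add: algebra_simps)
  fix s assume s: "s \<in> S"
  have "norm (f' i t v *\<^sub>R a - f' i s v *\<^sub>R a) = norm (f' i t v - f' i s v) * norm a"
    by (metis norm_scaleR scaleR_diff_left real_norm_def)
  also have "\<dots> \<le> (C * norm (t - s) * norm v) * norm a"
    using uniform_C11_derivative_lipschitz[OF f i t s, of v] by (simp add: mult_right_mono)
  finally show "norm (f' i t v *\<^sub>R a - f' i s v *\<^sub>R a) \<le> C * norm a * norm (t - s) * norm v"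
    by (simp add: algebra_simps)
qed

lemma uniform_C11_vector_sum:
  fixes f :: "'k::finite \<Rightarrow> 'i \<Rightarrow> 'a::real_normed_vector \<Rightarrow> real"
  assumes "\<And>k. uniform_C11 I S (f k) (f' k) C"
  shows "uniform_C11 I S (\<lambda>i t. \<Sum>k\<in>UNIV. f k i t *\<^sub>R axis k (1::real))
           (\<lambda>i t v. \<Sum>k\<in>UNIV. f' k i t v *\<^sub>R axis k (1::real)) (real CARD('k) * C)"
proof -
  have "uniform_C11 I S (\<lambda>i t. f k i t *\<^sub>R axis k (1::real)) (\<lambda>i t v. f' k i t v *\<^sub>R axis k (1::real)) C" for k
    using uniform_C11_scaleR_left[OF assms[of k], of "axis k (1::real)"] by simp
  from uniform_C11_sum[where f="\<lambda>k i t. f k i t *\<^sub>R axis k (1::real)"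
      and f'="\<lambda>k i t v. f' k i t v *\<^sub>R axis k (1::real)", OF finite this uniform_C11_nonneg[OF assms]]
  show ?thesis by simp
qed

lemma abs_inner_le_of_norm_le:
  fixes a b :: "'b::real_inner"
  assumes "norm a \<le> x" and "norm b \<le> y"
  shows "\<bar>inner a b\<bar> \<le> x * y"
  using Cauchy_Schwarz_ineq2[of a b] assms
  by (meson mult_mono norm_ge_zero order_trans)

lemma uniform_C11_inner:
  fixes f g :: "'i \<Rightarrow> 'a::real_normed_vector \<Rightarrow> 'b::real_inner"
  assumes f: "uniform_C11 I S f f' C" and g: "uniform_C11 I S g g' C" and S: "convex S"
  shows "uniform_C11 I S (\<lambda>i t. inner (f i t) (g i t))
           (\<lambda>i t v. inner (f' i t v) (g i t) + inner (f i t) (g' i t v)) (4 * C\<^sup>2)"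
  unfolding uniform_C11_def
proof (intro conjI ballI allI)
  have C: "C \<ge> 0" using uniform_C11_nonneg[OF f] .
  show "0 \<le> 4 * C\<^sup>2" by simp
  fix i t v assume i: "i \<in> I" and t: "t \<in> S"
  note fb = uniform_C11_bound[OF f i] and gb = uniform_C11_bound[OF g i]
  note fd = uniform_C11_derivative_bound[OF f i] and gd = uniform_C11_derivative_bound[OF g i]
  show "((\<lambda>s. inner (f i s) (g i s)) has_derivative
          (\<lambda>v. inner (f' i t v) (g i t) + inner (f i t) (g' i t v))) (at t)"
    using has_derivative_inner[OF uniform_C11_has_derivative[OF f i t] uniform_C11_has_derivative[OF g i t]]
    by (simp add: add.commute)
  show "norm (inner (f i t) (g i t)) \<le> 4 * C\<^sup>2"
    using abs_inner_le_of_norm_le[OF fb[OF t] gb[OF t]] C by (simp add: power2_eq_square)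
  have "norm (inner (f' i t v) (g i t) + inner (f i t) (g' i t v)) \<le> (C * norm v) * C + C * (C * norm v)"
    using abs_inner_le_of_norm_le[OF fd[OF t] gb[OF t], of v] abs_inner_le_of_norm_le[OF fb[OF t] gd[OF t], of v]
    by (smt (verit) real_norm_def)
  then show "norm (inner (f' i t v) (g i t) + inner (f i t) (g' i t v)) \<le> 4 * C\<^sup>2 * norm v"
    using C by (simp add: power2_eq_square algebra_simps)
  fix s assume s: "s \<in> S"
  have "inner (f' i t v) (g i t) + inner (f i t) (g' i t v) - (inner (f' i s v) (g i s) + inner (f i s) (g' i s v))
     = inner (f' i t v - f' i s v) (g i t) + inner (f' i s v) (g i t - g i s)
       + inner (f i t - f i s) (g' i t v) + inner (f i s) (g' i t v - g' i s v)"
    by (simp add: inner_diff_left inner_diff_right)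
  moreover have "\<bar>inner (f' i t v - f' i s v) (g i t)\<bar> \<le> (C * norm (t - s) * norm v) * C"
    using abs_inner_le_of_norm_le[OF uniform_C11_derivative_lipschitz[OF f i t s] gb[OF t]] .
  moreover have "\<bar>inner (f' i s v) (g i t - g i s)\<bar> \<le> (C * norm v) * (C * norm (t - s))"
    using abs_inner_le_of_norm_le[OF fd[OF s] uniform_C11_lipschitz[OF g S i t s]] .
  moreover have "\<bar>inner (f i t - f i s) (g' i t v)\<bar> \<le> (C * norm (t - s)) * (C * norm v)"
    using abs_inner_le_of_norm_le[OF uniform_C11_lipschitz[OF f S i t s] gd[OF t]] .
  moreover have "\<bar>inner (f i s) (g' i t v - g' i s v)\<bar> \<le> C * (C * norm (t - s) * norm v)"
    using abs_inner_le_of_norm_le[OF fb[OF s] uniform_C11_derivative_lipschitz[OF g i t s]] .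
  ultimately have "norm (inner (f' i t v) (g i t) + inner (f i t) (g' i t v)
      - (inner (f' i s v) (g i s) + inner (f i s) (g' i s v))) \<le> 4 * (C * C * norm (t - s) * norm v)"
    unfolding real_norm_def by (smt (verit, ccfv_threshold) mult.commute mult.left_commute)
  then show "norm (inner (f' i t v) (g i t) + inner (f i t) (g' i t v)
      - (inner (f' i s v) (g i s) + inner (f i s) (g' i s v))) \<le> 4 * C\<^sup>2 * norm (t - s) * norm v"
    by (simp add: power2_eq_square algebra_simps)
qed

lemma uniform_C11_integral:
  fixes h :: "'a::euclidean_space \<Rightarrow> 'c::euclidean_space \<Rightarrow> 'b::euclidean_space"
  assumes f: "uniform_C11 S T h h' C" and S: "compact S" and r: "r measurable_on S"
    and rB: "\<forall>x\<in>S. 0 \<le> r x \<and> r x \<le> B" and T: "open T" "convex T"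
    and ch: "\<And>t. t \<in> T \<Longrightarrow> continuous_on S (\<lambda>x. h x t)"
    and ch': "\<And>t v. t \<in> T \<Longrightarrow> continuous_on S (\<lambda>x. h' x t v)"
  shows "C11_on T (\<lambda>t. integral S (\<lambda>x. r x *\<^sub>R h x t)) (\<lambda>t v. integral S (\<lambda>x. r x *\<^sub>R h' x t v))
           (C * integral S r)"
  unfolding uniform_C11_def
proof (intro conjI ballI allI)
  have rB': "\<forall>x\<in>S. \<bar>r x\<bar> \<le> B" using rB by auto
  have I0: "0 \<le> integral S r"
    using integrable_bounded_measurable[OF S r rB'] rB by (simp add: integral_nonneg)
  show "0 \<le> C * integral S r" using uniform_C11_nonneg[OF f] I0 by simp
  fix t v assume t: "t \<in> T"
  show "((\<lambda>t. integral S (\<lambda>x. r x *\<^sub>R h x t)) has_derivative (\<lambda>v. integral S (\<lambda>x. r x *\<^sub>R h' x t v))) (at t)"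
  proof (rule has_derivative_integral_scaleR[where h=h and h'=h', OF S r rB T(1) t ch ch'[OF t]])
    show "linear (h' x t)" if "x \<in> S" for x
      using uniform_C11_has_derivative[OF f that t] has_derivative_linear by blast
    show "norm (h' x t v) \<le> C * norm v" if "x \<in> S" for x v
      using uniform_C11_derivative_bound[OF f that t] .
    show "norm (h x t' - h x t - h' x t (t' - t)) \<le> C * (norm (t' - t))\<^sup>2" if "x \<in> S" "t' \<in> T" for x t'
      using uniform_C11_remainder[OF f T(2) that(1) t that(2)] .
  qed auto
  show "norm (integral S (\<lambda>x. r x *\<^sub>R h x t)) \<le> C * integral S r"
    by (rule norm_integral_scaleR_le[OF S r rB ch[OF t]]) (use uniform_C11_bound[OF f _ t] in auto)
  have "norm (integral S (\<lambda>x. r x *\<^sub>R h' x t v)) \<le> (C * norm v) * integral S r"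
    by (rule norm_integral_scaleR_le[OF S r rB ch'[OF t]]) (use uniform_C11_derivative_bound[OF f _ t] in auto)
  then show "norm (integral S (\<lambda>x. r x *\<^sub>R h' x t v)) \<le> C * integral S r * norm v"
    by (simp add: algebra_simps)
  fix s assume s: "s \<in> T"
  have "integral S (\<lambda>x. r x *\<^sub>R h' x t v) - integral S (\<lambda>x. r x *\<^sub>R h' x s v)
      = integral S (\<lambda>x. r x *\<^sub>R (h' x t v - h' x s v))"
    using integrable_bounded_measurable_scaleR_continuous[OF S r rB' ch'[OF t]]
      integrable_bounded_measurable_scaleR_continuous[OF S r rB' ch'[OF s]]
    by (simp add: integral_diff scaleR_diff_right)
  also have "norm \<dots> \<le> (C * norm (t - s) * norm v) * integral S r"
    by (rule norm_integral_scaleR_le[OF S r rB])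
      (use ch'[OF t] ch'[OF s] uniform_C11_derivative_lipschitz[OF f _ t s] in \<open>auto intro!: continuous_intros\<close>)
  finally show "norm (integral S (\<lambda>x. r x *\<^sub>R h' x t v) - integral S (\<lambda>x. r x *\<^sub>R h' x s v))
      \<le> C * integral S r * norm (t - s) * norm v"
    by (simp add: algebra_simps)
qed

lemma uniform_C11_of_second_derivative_bounds:
  fixes g :: "'i \<Rightarrow> real^'n \<Rightarrow> 'b::real_normed_vector"
  assumes S: "convex S" and M: "M \<ge> 0"
    and d1: "\<And>i t. i \<in> I \<Longrightarrow> t \<in> S \<Longrightarrow> (g i has_derivative g' i t) (at t)"
    and d2: "\<And>i t k. i \<in> I \<Longrightarrow> t \<in> S \<Longrightarrow> ((\<lambda>s. g' i s (axis k 1)) has_derivative g'' i t k) (at t)"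
    and b0: "\<And>i t. i \<in> I \<Longrightarrow> t \<in> S \<Longrightarrow> norm (g i t) \<le> M"
    and b1: "\<And>i t k. i \<in> I \<Longrightarrow> t \<in> S \<Longrightarrow> norm (g' i t (axis k 1)) \<le> M"
    and b2: "\<And>i t k l. i \<in> I \<Longrightarrow> t \<in> S \<Longrightarrow> norm (g'' i t k (axis l 1)) \<le> M"
  shows "uniform_C11 I S g g' (real CARD('n) ^ 2 * M)"
  unfolding uniform_C11_def
proof (intro conjI ballI allI)
  define N where "N = real CARD('n)"
  have N1: "1 \<le> N" by (simp add: N_def)
  then have N2: "N \<le> N\<^sup>2" using mult_left_mono[of 1 N N] by (simp add: power2_eq_square)
  have NM: "M \<le> N\<^sup>2 * M" "N * M \<le> N\<^sup>2 * M"
    using mult_right_mono[OF N2 M] mult_right_mono[OF N1 M] by simp_all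
  show "0 \<le> real CARD('n) ^ 2 * M" using M by simp
  fix i t v assume i: "i \<in> I" and t: "t \<in> S"
  show "(g i has_derivative g' i t) (at t)" using d1[OF i t] .
  show "norm (g i t) \<le> real CARD('n) ^ 2 * M" using b0[OF i t] NM by (simp add: N_def)
  have lin1: "linear (g' i t)" if "t \<in> S" for t using d1[OF i that] has_derivative_linear by blast
  have lin2: "linear (g'' i t k)" if "t \<in> S" for t k using d2[OF i that] has_derivative_linear by blast
  have "norm (g' i t v) \<le> N * M * norm v"
    unfolding N_def by (rule norm_linear_le_of_axis_bound[OF lin1[OF t] b1[OF i t]])
  then show "norm (g' i t v) \<le> real CARD('n) ^ 2 * M * norm v"
    using mult_right_mono[OF NM(2) norm_ge_zero[of v]] by (simp add: N_def)
  fix s assume s: "s \<in> S"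
  have "linear (\<lambda>v. g' i t v - g' i s v)"
    using lin1[OF t] lin1[OF s] by (rule linear_compose_sub)
  moreover have "norm (g' i t (axis k 1) - g' i s (axis k 1)) \<le> N * M * norm (t - s)" for k
  proof (rule lipschitz_of_derivative_bound[OF S d2[OF i] _ _ t s])
    show "norm (g'' i t' k u) \<le> N * M * norm u" if "t' \<in> S" for t' u
      unfolding N_def by (rule norm_linear_le_of_axis_bound[OF lin2[OF that] b2[OF i that]])
  qed (use M N1 in auto)
  ultimately have "norm (g' i t v - g' i s v) \<le> N * (N * M * norm (t - s)) * norm v"
    unfolding N_def by (rule norm_linear_le_of_axis_bound)
  then show "norm (g' i t v - g' i s v) \<le> real CARD('n) ^ 2 * M * norm (t - s) * norm v"
    by (simp add: N_def power2_eq_square algebra_simps)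
qed

section \<open>Newton's method\<close>

locale newton_setting =
  fixes G :: "'a::euclidean_space \<Rightarrow> 'a" and DG :: "'a \<Rightarrow> 'a \<Rightarrow> 'a" and S :: "'a set" and m L :: real
  assumes has_derivative_G: "\<And>t. t \<in> S \<Longrightarrow> (G has_derivative DG t) (at t)"
    and DG_lower_bound: "\<And>t v. t \<in> S \<Longrightarrow> m * norm v \<le> norm (DG t v)"
    and m_pos: "m > 0"
    and remainder_G: "\<And>t s. t \<in> S \<Longrightarrow> s \<in> S \<Longrightarrow> norm (G s - G t - DG t (s - t)) \<le> L * (norm (s - t))\<^sup>2"
    and L_nonneg: "L \<ge> 0"
begin

lemma DG_linear: "t \<in> S \<Longrightarrow> linear (DG t)"
  using has_derivative_G has_derivative_linear by blast

lemma DG_inv: "t \<in> S \<Longrightarrow> DG t (inv (DG t) y) = y"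
  using linear_bij_of_norm_lower_bound[OF DG_linear DG_lower_bound m_pos] by (meson bij_inv_eq_iff)

lemma norm_inv_DG_le: "t \<in> S \<Longrightarrow> norm (inv (DG t) y) \<le> norm y / m"
  using DG_lower_bound[of t "inv (DG t) y"] DG_inv[of t y] m_pos by (simp add: field_simps mult.commute)

lemma newton_step_halves:
  assumes t: "t \<in> S" and t': "t - inv (DG t) (G t) \<in> S"
    and g0: "norm (G t) \<le> g0" and small: "L * g0 \<le> m\<^sup>2 / 2"
  shows "norm (G (t - inv (DG t) (G t))) \<le> norm (G t) / 2"
proof -
  define d where "d = inv (DG t) (G t)"
  have e: "G (t - d) - G t - DG t (t - d - t) = G (t - d)"
    using DG_inv[OF t] DG_linear[OF t] by (simp add: d_def linear_neg)
  have "norm (G (t - d)) \<le> L * (norm d)\<^sup>2"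
    using remainder_G[OF t t'[folded d_def], unfolded e] by simp
  also have "\<dots> \<le> L * (norm (G t) / m)\<^sup>2"
    using norm_inv_DG_le[OF t] L_nonneg by (intro mult_left_mono power_mono) (auto simp: d_def)
  also have "\<dots> = (L * norm (G t) / m\<^sup>2) * norm (G t)"
    by (simp add: power2_eq_square field_simps)
  also have "\<dots> \<le> (1/2) * norm (G t)"
  proof (rule mult_right_mono)
    have "L * norm (G t) \<le> L * g0" using g0 L_nonneg by (rule mult_left_mono)
    then show "L * norm (G t) / m\<^sup>2 \<le> 1/2" using small m_pos by (simp add: field_simps)
  qed simp
  finally show ?thesis by (simp add: d_def)
qed

context
  fixes t0 :: 'a and g0 :: real and th :: "nat \<Rightarrow> 'a"
  assumes cball_sub: "cball t0 (2 * g0 / m) \<subseteq> S"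
    and G_t0: "norm (G t0) \<le> g0" and small: "L * g0 \<le> m\<^sup>2 / 2"
    and th0: "th 0 = t0"
    and step: "\<And>i. th i \<in> S \<Longrightarrow> G (th i) \<noteq> 0 \<Longrightarrow> th (Suc i) = th i - inv (DG (th i)) (G (th i))"
    and stay: "\<And>i. G (th i) = 0 \<Longrightarrow> th (Suc i) = th i"
begin

lemma g0_nonneg: "g0 \<ge> 0"
  using G_t0 norm_ge_zero order_trans by blast

lemma pow2_divide_le: "g0 / 2^i \<le> g0"
  using divide_left_mono[of 1 "2^i" g0] g0_nonneg by simp

lemma in_S_of_dist_le:
  assumes "norm (t - t0) \<le> 2 * g0 / m * (1 - 1 / 2^i)"
  shows "t \<in> S"
proof -
  have "2 * g0 / m * (1 - 1 / 2^i) \<le> 2 * g0 / m"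
    using mult_left_le[of "1 - 1 / 2^i" "2 * g0 / m"] g0_nonneg m_pos by simp
  then show ?thesis using assms cball_sub by (auto simp: dist_norm norm_minus_commute)
qed

lemma newton_iterates_bounds: "norm (th i - t0) \<le> 2 * g0 / m * (1 - 1 / 2^i) \<and> norm (G (th i)) \<le> g0 / 2^i"
proof (induction i)
  case 0
  then show ?case using th0 G_t0 by simp
next
  case (Suc i)
  then have dist: "norm (th i - t0) \<le> 2 * g0 / m * (1 - 1 / 2^i)" and res: "norm (G (th i)) \<le> g0 / 2^i"
    by auto
  have mono: "2 * g0 / m * (1 - 1 / 2^i) \<le> 2 * g0 / m * (1 - 1 / 2^Suc i)"
    using g0_nonneg m_pos by (intro mult_left_mono) (auto simp: field_simps)
  show ?case
  proof (cases "G (th i) = 0")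
    case True
    then show ?thesis using stay[OF True] dist mono g0_nonneg by simp
  next
    case False
    have t: "th i \<in> S" using in_S_of_dist_le[OF dist] .
    define d where "d = inv (DG (th i)) (G (th i))"
    have th_Suc: "th (Suc i) = th i - d" using step[OF t False] by (simp add: d_def)
    have nd: "norm d \<le> g0 / m / 2^i"
      using order_trans[OF norm_inv_DG_le[OF t] divide_right_mono[OF res less_imp_le[OF m_pos]]]
      by (simp add: d_def field_simps)
    have "norm (th (Suc i) - t0) \<le> norm (th i - t0) + norm d"
      unfolding th_Suc using norm_triangle_ineq4[of "th i - t0" d] by (simp add: algebra_simps)
    also have "\<dots> \<le> 2 * g0 / m * (1 - 1 / 2^i) + g0 / m / 2^i" using dist nd by simp
    also have "\<dots> = 2 * g0 / m * (1 - 1 / 2^Suc i)" using m_pos by (simp add: field_simps)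
    finally have dist': "norm (th (Suc i) - t0) \<le> 2 * g0 / m * (1 - 1 / 2^Suc i)" .
    have "norm (G (th (Suc i))) \<le> norm (G (th i)) / 2"
      unfolding th_Suc d_def
    proof (rule newton_step_halves[OF t _ _ small])
      show "th i - inv (DG (th i)) (G (th i)) \<in> S"
        using in_S_of_dist_le[OF dist'] by (simp add: th_Suc d_def)
      show "norm (G (th i)) \<le> g0" using res pow2_divide_le[of i] by linarith
    qed
    also have "\<dots> \<le> g0 / 2 ^ Suc i" using res by (simp add: field_simps)
    finally show ?thesis using dist' by simp
  qed
qed

lemma newton_iterates_in_S: "th i \<in> S"
  using newton_iterates_bounds in_S_of_dist_le by blast

lemma newton_residual_halves: "norm (G (th (Suc i))) \<le> norm (G (th i)) / 2"
proof (cases "G (th i) = 0")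
  case True
  then show ?thesis using stay by simp
next
  case False
  have "norm (G (th i)) \<le> g0"
    using newton_iterates_bounds[of i] pow2_divide_le[of i] by linarith
  then show ?thesis
    using newton_step_halves[OF newton_iterates_in_S _ _ small] newton_iterates_in_S[of "Suc i"]
      step[OF newton_iterates_in_S False]
    by simp
qed

lemma newton_step_bound: "norm (th (Suc i) - th i) \<le> g0 / m / 2^i"
proof (cases "G (th i) = 0")
  case True
  then show ?thesis using stay g0_nonneg m_pos by simp
next
  case False
  have "norm (inv (DG (th i)) (G (th i))) \<le> g0 / 2^i / m"
    using order_trans[OF norm_inv_DG_le[OF newton_iterates_in_S]
        divide_right_mono[OF conjunct2[OF newton_iterates_bounds] less_imp_le[OF m_pos]]] .
  also have "g0 / 2^i / m = g0 / m / 2^i" by simp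
  finally show ?thesis using step[OF newton_iterates_in_S False] by simp
qed

lemma newton_converges: "\<exists>l. th \<longlonglongrightarrow> l \<and> l \<in> cball t0 (2 * g0 / m) \<and> G l = 0"
proof -
  define dl where "dl j = th (Suc j) - th j" for j
  have telescope: "th i = t0 + (\<Sum>j<i. dl j)" for i
    by (induction i) (simp_all add: th0 dl_def)
  have summable: "summable (\<lambda>j. norm (dl j))"
  proof (rule summable_comparison_test[where g="\<lambda>j. g0 / m * (1/2)^j"])
    show "\<exists>N. \<forall>n\<ge>N. norm (norm (dl n)) \<le> g0 / m * (1 / 2) ^ n"
    proof (intro exI allI impI)
      fix n :: nat
      have "norm (dl n) \<le> g0 / m / 2^n" using newton_step_bound by (simp add: dl_def)
      also have "g0 / m / 2^n = g0 / m * (1 / 2) ^ n" by (simp add: power_one_over)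
      finally show "norm (norm (dl n)) \<le> g0 / m * (1 / 2) ^ n" by simp
    qed
    show "summable (\<lambda>j. g0 / m * (1 / 2) ^ j)" by (intro summable_mult summable_geometric) simp
  qed
  have conv: "th \<longlonglongrightarrow> t0 + suminf dl"
    unfolding telescope by (intro tendsto_add tendsto_const summable_LIMSEQ summable_norm_cancel[OF summable])
  define l where "l = t0 + suminf dl"
  have l: "l \<in> cball t0 (2 * g0 / m)"
  proof (rule Lim_in_closed_set[OF closed_cball _ _ conv[folded l_def]])
    show "\<forall>\<^sub>F i in sequentially. th i \<in> cball t0 (2 * g0 / m)"
    proof (rule always_eventually, rule allI)
      fix i
      have "2 * g0 / m * (1 - 1 / 2^i) \<le> 2 * g0 / m"
        using mult_left_le[of "1 - 1 / 2^i" "2 * g0 / m"] g0_nonneg m_pos by simp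
      then show "th i \<in> cball t0 (2 * g0 / m)"
        using newton_iterates_bounds[of i] by (auto simp: dist_norm norm_minus_commute)
    qed
  qed simp
  have "l \<in> S" using l cball_sub by blast
  then have "(\<lambda>i. G (th i)) \<longlonglongrightarrow> G l"
    using isCont_tendsto_compose[OF has_derivative_continuous[OF has_derivative_G] conv[folded l_def]]
    by blast
  moreover have "(\<lambda>i. G (th i)) \<longlonglongrightarrow> 0"
  proof (rule tendsto_norm_zero_cancel, rule Lim_null_comparison)
    show "\<forall>\<^sub>F i in sequentially. norm (norm (G (th i))) \<le> g0 / 2^i"
      using newton_iterates_bounds by simp
    show "(\<lambda>i. g0 / 2^i) \<longlonglongrightarrow> 0" by (rule LIMSEQ_divide_realpow_zero) simp
  qed
  ultimately have "G l = 0" using LIMSEQ_unique by blast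
  then show ?thesis using conv l l_def by blast
qed

end

end

lemma feasible_weight_bounds:
  assumes "feasible P w" and "x \<in> rC P" and "j < rV P x"
  shows "0 \<le> w x j \<and> w x j \<le> 1"
proof -
  have nonneg: "\<forall>j<rV P x. 0 \<le> w x j" and "(\<Sum>j<rV P x. w x j) \<le> 1"
    using assms(1,2) by (auto simp: feasible_def)
  moreover have "w x j \<le> (\<Sum>j<rV P x. w x j)" using nonneg assms(3) by (intro member_le_sum) auto
  ultimately show ?thesis using assms(3) by auto
qed

lemma qp_dom_compact:
  assumes w: "feasible P w"
  shows "compact (qp_dom P w)"
proof -
  have eq: "qp_dom P w = {dw. \<forall>x j. dw x j \<in> {-2..2}} \<inter>
     ({dw. \<forall>x j. (x \<notin> rC P \<or> rV P x \<le> j) \<longrightarrow> dw x j = 0}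
      \<inter> {dw. \<forall>x j. (x \<in> rC P \<and> j < rV P x) \<longrightarrow> 0 \<le> w x j + dw x j}
      \<inter> {dw. \<forall>x. x \<in> rC P \<longrightarrow> (\<Sum>j<rV P x. w x j + dw x j) \<le> 1})"
    (is "_ = ?box \<inter> ?constraints")
  proof (intro equalityI subsetI)
    fix dw assume dw: "dw \<in> qp_dom P w"
    then have supp: "supp_ok P dw" and w': "feasible P (\<lambda>x j. w x j + dw x j)" by (auto simp: qp_dom_def)
    have "dw x j \<in> {-2..2}" for x j
      using feasible_weight_bounds[OF w, of x j] feasible_weight_bounds[OF w', of x j] supp
      by (cases "x \<in> rC P \<and> j < rV P x") (auto simp: supp_ok_def)
    then show "dw \<in> ?box \<inter> ?constraints" using supp w' by (auto simp: supp_ok_def feasible_def)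
  qed (auto simp: qp_dom_def supp_ok_def feasible_def)
  moreover have "closed ?constraints"
  proof -
    have "closed {dw :: weights. c \<longrightarrow> dw x j = 0}" for c x j
      by (intro closed_Collect_imp open_Collect_const closed_Collect_eq continuous_on_eval2 continuous_on_const)
    moreover have "closed {dw :: weights. c \<longrightarrow> 0 \<le> w x j + dw x j}" for c x j
      by (intro closed_Collect_imp open_Collect_const closed_Collect_le continuous_on_const
          continuous_on_add continuous_on_eval2)
    moreover have "closed {dw :: weights. c \<longrightarrow> (\<Sum>j<n. w x j + dw x j) \<le> 1}" for c x n
      by (intro closed_Collect_imp open_Collect_const closed_Collect_le continuous_on_const
          continuous_on_sum continuous_on_add continuous_on_eval2)
    ultimately show ?thesis by (intro closed_Int closed_Collect_all)
  qed
  ultimately show ?thesis unfolding eq by (intro compact_Int_closed compact_functions_in_interval)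
qed

definition pgm_guarantee :: "('n::finite) robot \<Rightarrow> real \<Rightarrow> real \<Rightarrow> real \<Rightarrow> real \<Rightarrow> real \<Rightarrow> bool" where
  "pgm_guarantee P \<alpha> \<eta> \<epsilon> \<rho> MV \<longleftrightarrow>
     (\<exists>th w gam tht wt pr T. pgm_run P \<alpha> \<eta> \<epsilon> th w gam tht wt pr T) \<and>
     (\<forall>th w gam tht wt pr T. pgm_run P \<alpha> \<eta> \<epsilon> th w gam tht wt pr T \<longrightarrow>
        (\<forall>k. enat k \<le> T \<longrightarrow>
           Vop P \<alpha> (pr k 0) (proj_w w wt k) \<le> MV \<and>
           th k \<in> cball (thm1 P) \<rho> \<and>
           (\<forall>i. Vop P \<alpha> (pr k (Suc i)) (proj_w w wt k) \<le> 3/4 * Vop P \<alpha> (pr k i) (proj_w w wt k))))"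

lemma pgm_run_initial:
  assumes "pgm_run P \<alpha> \<eta> \<epsilon> th w gam tht wt pr T"
  shows "w 0 = (\<lambda>x j. 0)" and "projection P \<alpha> (w 0) (thm1 P) (pr 0) (th 0)"
  using assms unfolding pgm_run_def by blast+

lemma pgm_run_iteration:
  assumes "pgm_run P \<alpha> \<eta> \<epsilon> th w gam tht wt pr T" and "1 \<le> k" and "enat k \<le> T"
  shows "feasible P (wt k)"
    and "projection P \<alpha> (wt k) (th (k - 1)) (pr k) (tht k)"
    and "th k = th (k - 1) \<and> w k = w (k - 1) \<or> th k = tht k \<and> w k = wt k"
proof -
  have "(\<lambda>x j. wt k x j - w (k - 1) x j) \<in> qp_dom P (w (k - 1))"
    and "projection P \<alpha> (wt k) (th (k - 1)) (pr k) (tht k)"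
    and "if Kop P (tht k) > Kop P (th (k - 1))
         then gam k = \<eta> * gam (k - 1) \<and> th k = th (k - 1) \<and> w k = w (k - 1)
         else gam k = gam (k - 1) / \<eta> \<and> th k = tht k \<and> w k = wt k"
    using assms unfolding pgm_run_def Let_def by blast+
  then show "feasible P (wt k)" and "projection P \<alpha> (wt k) (th (k - 1)) (pr k) (tht k)"
    and "th k = th (k - 1) \<and> w k = w (k - 1) \<or> th k = tht k \<and> w k = wt k"
    by (auto simp: qp_dom_def split: if_splits)
qed

section \<open>Regularity of the discretised dynamics\<close>

locale robot_regular =
  fixes P :: "('n::finite) robot" and U :: "((real^3) \<times> (real^'n)) set" and B\<rho> :: real
  assumes R_compact: "compact (rR P)"
    and rho_meas: "rho P measurable_on rR P"
    and rho_bdd: "\<forall>x\<in>rR P. rho P x \<le> B\<rho>"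
    and rho_pos: "\<forall>x\<in>rR P. rho P x > 0"
    and C_fin: "finite (rC P)" and C_sub: "rC P \<subseteq> rR P"
    and dt_pos: "dt P > 0"
    and U_sup: "rR P \<times> UNIV \<subseteq> U" and X_smooth: "smooth_on U (\<lambda>p. rX P (fst p) (snd p))"
    and v_C3: "\<forall>x\<in>rC P. \<forall>j<rV P x. Ck_on 3 UNIV (\<lambda>\<theta>. rv P x \<theta> j)"
begin

definition F :: "(real^3) \<times> (real^'n) \<Rightarrow> real^3" where "F = (\<lambda>p. rX P (fst p) (snd p))"
definition Bl :: "(real^'n) set" where "Bl = ball (thm1 P) 1"
definition mass :: "real^3 \<Rightarrow> real" where "mass x = rho P x / (dt P)\<^sup>2"
definition dX where "dX x t v = iter_dir F [(0, v)] (x, t)"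
definition d2X where "d2X x t v u = iter_dir F [(0, u), (0, v)] (x, t)"

lemma Bl_open: "open Bl" and Bl_convex: "convex Bl" and thm1_in_Bl: "thm1 P \<in> Bl"
  by (auto simp: Bl_def)

lemma F_C3: "Ck_on 3 U F"
  using X_smooth unfolding smooth_on_def F_def by blast

lemma F_iter_dir_has_derivative:
  assumes "x \<in> rR P" and "length us < 3"
  shows "((\<lambda>s. iter_dir F us (x, s)) has_derivative (\<lambda>v. iter_dir F ((0, v) # us) (x, t))) (at t)"
  using F_C3 U_sup assms unfolding Ck_on_def by (blast intro: has_derivative_iter_dir_snd)

lemma rX_has_derivative: "x \<in> rR P \<Longrightarrow> (rX P x has_derivative dX x t) (at t)"
  using F_iter_dir_has_derivative[of x "[]" t] by (simp add: F_def dX_def[abs_def])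

lemma dX_has_derivative: "x \<in> rR P \<Longrightarrow> ((\<lambda>s. dX x s v) has_derivative d2X x t v) (at t)"
  using F_iter_dir_has_derivative[of x "[(0, v)]" t] by (simp add: dX_def d2X_def[abs_def])

lemma F_iter_dir_continuous:
  assumes "length us \<le> 3"
  shows "continuous_on (rR P) (\<lambda>x. iter_dir F us (x, t))"
proof -
  have "continuous_on U (iter_dir F us)" using F_C3 assms unfolding Ck_on_def by blast
  moreover have "continuous_on (rR P) (\<lambda>x. (x, t))" by (intro continuous_intros)
  moreover have "(\<lambda>x. (x, t)) ` rR P \<subseteq> U" using U_sup by blast
  ultimately show ?thesis using continuous_on_compose2 by blast
qed

lemma continuous_on_rX: "continuous_on (rR P) (\<lambda>x. rX P x t)"
  and continuous_on_dX: "continuous_on (rR P) (\<lambda>x. dX x t v)"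
  and continuous_on_d2X: "continuous_on (rR P) (\<lambda>x. d2X x t v u)"
  using F_iter_dir_continuous[of "[]" t] F_iter_dir_continuous[of "[(0, v)]" t]
    F_iter_dir_continuous[of "[(0, u), (0, v)]" t]
  by (simp_all add: F_def dX_def d2X_def)

lemma kinematics_C11:
  obtains C where "uniform_C11 (rR P) Bl (\<lambda>x. rX P x) dX C"
    and "\<And>k. uniform_C11 (rR P) Bl (\<lambda>x t. dX x t (axis k 1)) (\<lambda>x t. d2X x t (axis k 1)) C"
proof -
  have "finite (range (\<lambda>k::'n. (0::real^3, axis k (1::real))))" by simp
  moreover have "rR P \<times> cball (thm1 P) 1 \<subseteq> U" using U_sup by blast
  ultimately obtain M where M: "M \<ge> 0" and M_bound: "\<forall>us\<in>{us. set us \<subseteq> range (\<lambda>k. (0, axis k 1)) \<and> length us \<le> 3}.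
      \<forall>z\<in>rR P \<times> cball (thm1 P) 1. norm (iter_dir F us z) \<le> M"
    using Ck_on_iter_dir_bounded[OF F_C3 compact_Times[OF R_compact compact_cball]] by blast
  have bound: "norm (iter_dir F us z) \<le> M"
    if "set us \<subseteq> range (\<lambda>k. (0, axis k 1))" "length us \<le> 3" "z \<in> rR P \<times> cball (thm1 P) 1" for us z
    using M_bound that by blast
  have z: "(x, t) \<in> rR P \<times> cball (thm1 P) 1" if "x \<in> rR P" "t \<in> Bl" for x t
    using that by (auto simp: Bl_def)
  have "uniform_C11 (rR P) Bl (\<lambda>x. rX P x) dX (real CARD('n) ^ 2 * M)"
  proof (rule uniform_C11_of_second_derivative_bounds[OF Bl_convex M])
    fix x t k l assume "x \<in> rR P" "t \<in> Bl"
    show "(rX P x has_derivative dX x t) (at t)" by (rule rX_has_derivative) fact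
    show "((\<lambda>s. dX x s (axis k 1)) has_derivative d2X x t (axis k 1)) (at t)"
      by (rule dX_has_derivative) fact
    show "norm (rX P x t) \<le> M" using bound[of "[]", OF _ _ z] \<open>x \<in> rR P\<close> \<open>t \<in> Bl\<close> by (simp add: F_def)
    show "norm (dX x t (axis k 1)) \<le> M"
      using bound[of "[(0, axis k 1)]", OF _ _ z] \<open>x \<in> rR P\<close> \<open>t \<in> Bl\<close> by (simp add: dX_def)
    show "norm (d2X x t (axis k 1) (axis l 1)) \<le> M"
      using bound[of "[(0, axis l 1), (0, axis k 1)]", OF _ _ z] \<open>x \<in> rR P\<close> \<open>t \<in> Bl\<close> by (simp add: d2X_def)
  qed
  moreover have "uniform_C11 (rR P) Bl (\<lambda>x t. dX x t (axis k 1)) (\<lambda>x t. d2X x t (axis k 1))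
      (real CARD('n) ^ 2 * M)" for k
  proof (rule uniform_C11_of_second_derivative_bounds[OF Bl_convex M])
    fix x t l m assume "x \<in> rR P" "t \<in> Bl"
    show "((\<lambda>s. dX x s (axis k 1)) has_derivative d2X x t (axis k 1)) (at t)"
      by (rule dX_has_derivative) fact
    show "((\<lambda>s. d2X x s (axis k 1) (axis l 1)) has_derivative
        (\<lambda>w. iter_dir F [(0, w), (0, axis l 1), (0, axis k 1)] (x, t))) (at t)"
      using F_iter_dir_has_derivative[of x "[(0, axis l 1), (0, axis k 1)]" t] \<open>x \<in> rR P\<close>
      by (simp add: d2X_def)
    show "norm (dX x t (axis k 1)) \<le> M"
      using bound[of "[(0, axis k 1)]", OF _ _ z] \<open>x \<in> rR P\<close> \<open>t \<in> Bl\<close> by (simp add: dX_def)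
    show "norm (d2X x t (axis k 1) (axis l 1)) \<le> M"
      using bound[of "[(0, axis l 1), (0, axis k 1)]", OF _ _ z] \<open>x \<in> rR P\<close> \<open>t \<in> Bl\<close> by (simp add: d2X_def)
    show "norm (iter_dir F [(0, axis m 1), (0, axis l 1), (0, axis k 1)] (x, t)) \<le> M"
      using bound[of "[(0, axis m 1), (0, axis l 1), (0, axis k 1)]", OF _ _ z] \<open>x \<in> rR P\<close> \<open>t \<in> Bl\<close>
      by simp
  qed
  ultimately show ?thesis using that by blast
qed

definition contacts :: "((real^3) \<times> nat) set" where "contacts = {(x, j). x \<in> rC P \<and> j < rV P x}"
definition vcol :: "(real^3) \<times> nat \<Rightarrow> real^'n \<Rightarrow> real^3" where "vcol p = (\<lambda>\<theta>. rv P (fst p) \<theta> (snd p))"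
definition dv where "dv p t v = iter_dir (vcol p) [v] t"

lemma contacts_finite: "finite contacts"
proof -
  have "contacts \<subseteq> rC P \<times> (\<Union>x\<in>rC P. {..<rV P x})" by (auto simp: contacts_def)
  then show ?thesis using C_fin finite_subset by fastforce
qed

lemma contacts_Sigma: "contacts = Sigma (rC P) (\<lambda>x. {..<rV P x})"
  by (auto simp: contacts_def)

lemma vcol_C3: "p \<in> contacts \<Longrightarrow> Ck_on 3 UNIV (vcol p)"
  using v_C3 by (auto simp: contacts_def vcol_def)

lemma vcol_iter_dir_has_derivative:
  "p \<in> contacts \<Longrightarrow> length us < 3 \<Longrightarrow> (iter_dir (vcol p) us has_derivative (\<lambda>v. iter_dir (vcol p) (v # us) t)) (at t)"
  using vcol_C3 unfolding Ck_on_def by (blast intro: has_derivative_iter_dir)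

lemma contact_forces_C11:
  obtains C where "uniform_C11 contacts Bl (\<lambda>p t. rv P (fst p) t (snd p)) dv C"
proof -
  define Z where "Z = {us. set us \<subseteq> range (\<lambda>k::'n. axis k (1::real)) \<and> length us \<le> 3} \<times> cball (thm1 P) 1"
  have "\<exists>M\<ge>0. \<forall>p\<in>contacts. \<forall>z\<in>Z. norm (iter_dir (vcol p) (fst z) (snd z)) \<le> M"
  proof (rule finite_family_uniformly_bounded[OF contacts_finite])
    fix p assume p: "p \<in> contacts"
    have "finite (range (\<lambda>k::'n. axis k (1::real)))" by simp
    then obtain M where "\<forall>us\<in>{us. set us \<subseteq> range (\<lambda>k. axis k 1) \<and> length us \<le> 3}.
        \<forall>z\<in>cball (thm1 P) 1. norm (iter_dir (vcol p) us z) \<le> M"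
      using Ck_on_iter_dir_bounded[OF vcol_C3[OF p] compact_cball] by blast
    then show "\<exists>M. \<forall>z\<in>Z. norm (iter_dir (vcol p) (fst z) (snd z)) \<le> M"
      unfolding Z_def by auto
  qed
  then obtain M where M: "M \<ge> 0" and M_bound: "\<forall>p\<in>contacts. \<forall>z\<in>Z. norm (iter_dir (vcol p) (fst z) (snd z)) \<le> M"
    by blast
  have bound: "norm (iter_dir (vcol p) us z) \<le> M"
    if "p \<in> contacts" "set us \<subseteq> range (\<lambda>k. axis k 1)" "length us \<le> 3" "z \<in> cball (thm1 P) 1" for p us z
    using M_bound that unfolding Z_def by force
  have z: "t \<in> cball (thm1 P) 1" if "t \<in> Bl" for t using that by (auto simp: Bl_def)
  have "uniform_C11 contacts Bl (\<lambda>p. vcol p) dv (real CARD('n) ^ 2 * M)"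
  proof (rule uniform_C11_of_second_derivative_bounds[OF Bl_convex M])
    fix p t k l assume p: "p \<in> contacts" and t: "t \<in> Bl"
    show "(vcol p has_derivative dv p t) (at t)"
      using vcol_iter_dir_has_derivative[OF p, of "[]" t] by (simp add: dv_def[abs_def])
    show "((\<lambda>s. dv p s (axis k 1)) has_derivative (\<lambda>u. iter_dir (vcol p) [u, axis k 1] t)) (at t)"
      using vcol_iter_dir_has_derivative[OF p, of "[axis k 1]" t] by (simp add: dv_def)
    show "norm (vcol p t) \<le> M" using bound[OF p, of "[]"] z[OF t] by simp
    show "norm (dv p t (axis k 1)) \<le> M" using bound[OF p, of "[axis k 1]"] z[OF t] by (simp add: dv_def)
    show "norm (iter_dir (vcol p) [axis l 1, axis k 1] t) \<le> M"
      using bound[OF p, of "[axis l 1, axis k 1]"] z[OF t] by simp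
  qed
  then show ?thesis using that by (simp add: vcol_def)
qed

definition disp where "disp x t = rX P x t - rX P x (thm1 P)"
definition disp_prev where "disp_prev x = rX P x (thm2 P) - rX P x (thm1 P)"

definition hA where
  "hA x t = (\<Sum>k\<in>UNIV. inner (dX x t (axis k 1)) (disp x t) *\<^sub>R axis k (1::real))"
definition hA' where
  "hA' x t v = (\<Sum>k\<in>UNIV. (inner (d2X x t (axis k 1) v) (disp x t) + inner (dX x t (axis k 1)) (dX x t v))
                  *\<^sub>R axis k (1::real))"
definition hB where
  "hB x t = (\<Sum>k\<in>UNIV. inner (dX x t (axis k 1)) (disp_prev x) *\<^sub>R axis k (1::real))"
definition hB' where
  "hB' x t v = (\<Sum>k\<in>UNIV. inner (d2X x t (axis k 1) v) (disp_prev x) *\<^sub>R axis k (1::real))"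
definition hK where "hK x t = (1/2) * inner (disp x t) (disp x t)"
definition hK' where "hK' x t v = inner (disp x t) (dX x t v)"
definition hF where
  "hF p t = (\<Sum>k\<in>UNIV. inner (dX (fst p) t (axis k 1)) (rv P (fst p) t (snd p)) *\<^sub>R axis k (1::real))"
definition hF' where
  "hF' p t v = (\<Sum>k\<in>UNIV. (inner (d2X (fst p) t (axis k 1) v) (rv P (fst p) t (snd p))
                  + inner (dX (fst p) t (axis k 1)) (dv p t v)) *\<^sub>R axis k (1::real))"

definition dA where "dA t v = integral (rR P) (\<lambda>x. mass x *\<^sub>R hA' x t v)"
definition dB where "dB t v = integral (rR P) (\<lambda>x. mass x *\<^sub>R hB' x t v)"
definition dK where "dK t v = integral (rR P) (\<lambda>x. mass x *\<^sub>R hK' x t v)"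
definition dF where "dF w t v = (\<Sum>p\<in>contacts. w (fst p) (snd p) *\<^sub>R hF' p t v)"

lemma mass_measurable: "mass measurable_on rR P"
  unfolding mass_def[abs_def] by (rule measurable_on_cdivide[OF rho_meas])

lemma mass_bounds: "\<forall>x\<in>rR P. 0 \<le> mass x \<and> mass x \<le> B\<rho> / (dt P)\<^sup>2"
  using rho_bdd rho_pos dt_pos by (auto simp: mass_def divide_right_mono less_imp_le)

lemma DX_transpose_mult: "x \<in> rR P \<Longrightarrow> y v* DX P x t = (\<Sum>k\<in>UNIV. inner (dX x t (axis k 1)) y *\<^sub>R axis k (1::real))"
  using transpose_jacobian_mult_vector[OF rX_has_derivative, of x t y] by (simp add: DX_def)

lemma Aop_integral: "Aop P t = integral (rR P) (\<lambda>x. mass x *\<^sub>R hA x t)"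
  unfolding Aop_def by (rule integral_cong) (simp add: DX_transpose_mult hA_def disp_def mass_def)

lemma Fc_sum: "Fc P t w = (\<Sum>p\<in>contacts. w (fst p) (snd p) *\<^sub>R hF p t)"
proof -
  have "Fc P t w = (\<Sum>x\<in>rC P. \<Sum>j<rV P x. w x j *\<^sub>R hF (x, j) t)"
    unfolding Fc_def by (intro sum.cong refl) (use C_sub in \<open>auto simp: DX_transpose_mult hF_def\<close>)
  also have "\<dots> = (\<Sum>p\<in>contacts. w (fst p) (snd p) *\<^sub>R hF p t)"
    unfolding contacts_Sigma using C_fin by (subst sum.Sigma) (auto simp: split_def)
  finally show ?thesis .
qed

lemma Bop_integral: "Bop P t w = integral (rR P) (\<lambda>x. mass x *\<^sub>R hB x t) - Fc P t w - tau P"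
  unfolding Bop_def
  by (rule arg_cong2[where f="\<lambda>a b. a - b - tau P"], rule integral_cong)
     (simp_all add: DX_transpose_mult hB_def disp_prev_def mass_def)

lemma Kop_integral: "Kop P t = integral (rR P) (\<lambda>x. mass x *\<^sub>R hK x t)"
  unfolding Kop_def
  by (rule integral_cong) (simp add: hK_def disp_def mass_def power2_norm_eq_inner field_simps)

lemma Aop_thm1: "Aop P (thm1 P) = 0"
  by (simp add: Aop_integral hA_def disp_def)

lemma disp_C11:
  assumes "uniform_C11 (rR P) Bl (\<lambda>x. rX P x) dX C"
  shows "uniform_C11 (rR P) Bl disp dX (2 * C)"
proof -
  have "uniform_C11 (rR P) Bl (\<lambda>x t. rX P x (thm1 P)) (\<lambda>x t v. 0) C"
    by (rule uniform_C11_const) (use uniform_C11_nonneg[OF assms] uniform_C11_bound[OF assms _ thm1_in_Bl] in auto)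
  from uniform_C11_diff[OF assms this] show ?thesis by (simp add: disp_def[abs_def])
qed

lemma hA_C11: obtains C where "uniform_C11 (rR P) Bl hA hA' C"
proof -
  obtain C where X: "uniform_C11 (rR P) Bl (\<lambda>x. rX P x) dX C"
    and dX: "\<And>k. uniform_C11 (rR P) Bl (\<lambda>x t. dX x t (axis k 1)) (\<lambda>x t. d2X x t (axis k 1)) C"
    using kinematics_C11 by blast
  have "uniform_C11 (rR P) Bl (\<lambda>x t. dX x t (axis k 1)) (\<lambda>x t. d2X x t (axis k 1)) (2 * C)" for k
    by (rule uniform_C11_mono[OF dX]) (use uniform_C11_nonneg[OF X] in auto)
  from uniform_C11_inner[OF this disp_C11[OF X] Bl_convex]
  have "uniform_C11 (rR P) Bl (\<lambda>x t. inner (dX x t (axis k 1)) (disp x t))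
      (\<lambda>x t v. inner (d2X x t (axis k 1) v) (disp x t) + inner (dX x t (axis k 1)) (dX x t v)) (4 * (2 * C)\<^sup>2)"
    for k .
  from uniform_C11_vector_sum[where f="\<lambda>k x t. inner (dX x t (axis k 1)) (disp x t)"
      and f'="\<lambda>k x t v. inner (d2X x t (axis k 1) v) (disp x t) + inner (dX x t (axis k 1)) (dX x t v)", OF this]
  show ?thesis using that unfolding hA_def[abs_def] hA'_def[abs_def] by blast
qed

lemma hB_C11: obtains C where "uniform_C11 (rR P) Bl hB hB' C"
proof -
  obtain C where X: "uniform_C11 (rR P) Bl (\<lambda>x. rX P x) dX C"
    and dX: "\<And>k. uniform_C11 (rR P) Bl (\<lambda>x t. dX x t (axis k 1)) (\<lambda>x t. d2X x t (axis k 1)) C"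
    using kinematics_C11 by blast
  have "continuous_on (rR P) disp_prev"
    unfolding disp_prev_def[abs_def] by (intro continuous_intros continuous_on_rX)
  then obtain Ce where Ce: "Ce \<ge> 0" "\<And>x. x \<in> rR P \<Longrightarrow> norm (disp_prev x) \<le> Ce"
    using continuous_on_compact_bound[OF R_compact] by blast
  have C0: "C \<ge> 0" using uniform_C11_nonneg[OF X] .
  have dX': "uniform_C11 (rR P) Bl (\<lambda>x t. dX x t (axis k 1)) (\<lambda>x t. d2X x t (axis k 1)) (C + Ce)" for k
    by (rule uniform_C11_mono[OF dX]) (use Ce in auto)
  have "norm (disp_prev x) \<le> C + Ce" if "x \<in> rR P" for x using Ce(2)[OF that] C0 by linarith
  then have "uniform_C11 (rR P) Bl (\<lambda>x t. disp_prev x) (\<lambda>x t v. 0) (C + Ce)"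
    by (intro uniform_C11_const) (use Ce C0 in auto)
  from uniform_C11_inner[OF dX' this Bl_convex]
  have "uniform_C11 (rR P) Bl (\<lambda>x t. inner (dX x t (axis k 1)) (disp_prev x))
      (\<lambda>x t v. inner (d2X x t (axis k 1) v) (disp_prev x)) (4 * (C + Ce)\<^sup>2)" for k
    by simp
  from uniform_C11_vector_sum[where f="\<lambda>k x t. inner (dX x t (axis k 1)) (disp_prev x)"
      and f'="\<lambda>k x t v. inner (d2X x t (axis k 1) v) (disp_prev x)", OF this]
  show ?thesis using that unfolding hB_def[abs_def] hB'_def[abs_def] by blast
qed

lemma hK_C11: obtains C where "uniform_C11 (rR P) Bl hK hK' C"
proof -
  obtain C where X: "uniform_C11 (rR P) Bl (\<lambda>x. rX P x) dX C"
    using kinematics_C11 by blast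
  note d = disp_C11[OF X]
  from uniform_C11_scaleR[OF uniform_C11_inner[OF d d Bl_convex], of "1/2"]
  have "uniform_C11 (rR P) Bl hK hK' (\<bar>1/2\<bar> * (4 * (2 * C)\<^sup>2))"
    by (rule uniform_C11_cong) (simp_all add: hK_def hK'_def inner_commute)
  then show ?thesis using that by blast
qed

lemma hF_C11: obtains C where "uniform_C11 contacts Bl hF hF' C"
proof -
  obtain CX where X: "uniform_C11 (rR P) Bl (\<lambda>x. rX P x) dX CX"
    and dX: "\<And>k. uniform_C11 (rR P) Bl (\<lambda>x t. dX x t (axis k 1)) (\<lambda>x t. d2X x t (axis k 1)) CX"
    using kinematics_C11 by blast
  obtain Cv where v: "uniform_C11 contacts Bl (\<lambda>p t. rv P (fst p) t (snd p)) dv Cv"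
    by (rule contact_forces_C11)
  define C where "C = CX + Cv"
  have "fst ` contacts \<subseteq> rR P" using C_sub by (auto simp: contacts_def)
  then have "uniform_C11 contacts Bl (\<lambda>p t. dX (fst p) t (axis k 1)) (\<lambda>p t. d2X (fst p) t (axis k 1)) C" for k
    by (intro uniform_C11_mono[OF uniform_C11_reindex[OF dX]])
      (use uniform_C11_nonneg[OF X] uniform_C11_nonneg[OF v] in \<open>auto simp: C_def\<close>)
  moreover have "uniform_C11 contacts Bl (\<lambda>p t. rv P (fst p) t (snd p)) dv C"
    by (rule uniform_C11_mono[OF v]) (use uniform_C11_nonneg[OF X] in \<open>auto simp: C_def\<close>)
  ultimately have "uniform_C11 contacts Bl (\<lambda>p t. inner (dX (fst p) t (axis k 1)) (rv P (fst p) t (snd p)))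
      (\<lambda>p t v. inner (d2X (fst p) t (axis k 1) v) (rv P (fst p) t (snd p))
               + inner (dX (fst p) t (axis k 1)) (dv p t v)) (4 * C\<^sup>2)" for k
    by (rule uniform_C11_inner[OF _ _ Bl_convex])
  from uniform_C11_vector_sum[where f="\<lambda>k p t. inner (dX (fst p) t (axis k 1)) (rv P (fst p) t (snd p))"
      and f'="\<lambda>k p t v. inner (d2X (fst p) t (axis k 1) v) (rv P (fst p) t (snd p))
               + inner (dX (fst p) t (axis k 1)) (dv p t v)", OF this]
  show ?thesis using that unfolding hF_def[abs_def] hF'_def[abs_def] by blast
qed

lemma integrands_continuous:
  "continuous_on (rR P) (\<lambda>x. hA x t)" "continuous_on (rR P) (\<lambda>x. hA' x t v)"
  "continuous_on (rR P) (\<lambda>x. hB x t)" "continuous_on (rR P) (\<lambda>x. hB' x t v)"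
  "continuous_on (rR P) (\<lambda>x. hK x t)" "continuous_on (rR P) (\<lambda>x. hK' x t v)"
  unfolding hA_def hA'_def hB_def hB'_def hK_def hK'_def disp_def disp_prev_def
  by (intro continuous_intros continuous_on_rX continuous_on_dX continuous_on_d2X)+

lemma Aop_C11: obtains CA where "C11_on Bl (Aop P) dA CA"
proof -
  obtain C where "uniform_C11 (rR P) Bl hA hA' C" using hA_C11 by blast
  from uniform_C11_integral[OF this R_compact mass_measurable mass_bounds Bl_open Bl_convex
      integrands_continuous(1,2)]
  have "C11_on Bl (Aop P) dA (C * integral (rR P) mass)"
    unfolding dA_def[abs_def] Aop_integral[abs_def] .
  then show ?thesis using that by blast
qed

lemma Kop_has_derivative: "t \<in> Bl \<Longrightarrow> (Kop P has_derivative dK t) (at t)"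
proof -
  assume t: "t \<in> Bl"
  obtain C where "uniform_C11 (rR P) Bl hK hK' C" using hK_C11 by blast
  from uniform_C11_integral[OF this R_compact mass_measurable mass_bounds Bl_open Bl_convex
      integrands_continuous(5,6)]
  have "C11_on Bl (Kop P) dK (C * integral (rR P) mass)"
    unfolding dK_def[abs_def] Kop_integral[abs_def] .
  from uniform_C11_has_derivative[OF this UNIV_I t] show ?thesis .
qed

lemma Fc_C11:
  obtains C where "\<And>w. feasible P w \<Longrightarrow> C11_on Bl (\<lambda>t. Fc P t w) (dF w) C"
proof -
  obtain C where hF: "uniform_C11 contacts Bl hF hF' C" using hF_C11 by blast
  have C0: "C \<ge> 0" using uniform_C11_nonneg[OF hF] .
  have "C11_on Bl (\<lambda>t. Fc P t w) (dF w) (real (card contacts) * C)" if w: "feasible P w" for w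
  proof -
    have "C11_on Bl (\<lambda>t. w (fst p) (snd p) *\<^sub>R hF p t) (\<lambda>t v. w (fst p) (snd p) *\<^sub>R hF' p t v) C"
      if p: "p \<in> contacts" for p
    proof (rule uniform_C11_mono)
      have "C11_on Bl (hF p) (hF' p) C" using uniform_C11_reindex[OF hF, of "\<lambda>_. p" UNIV] p by auto
      from uniform_C11_scaleR[OF this, of "w (fst p) (snd p)"]
      show "C11_on Bl (\<lambda>t. w (fst p) (snd p) *\<^sub>R hF p t) (\<lambda>t v. w (fst p) (snd p) *\<^sub>R hF' p t v)
          (\<bar>w (fst p) (snd p)\<bar> * C)" .
      show "\<bar>w (fst p) (snd p)\<bar> * C \<le> C"
        using feasible_weight_bounds[OF w, of "fst p" "snd p"] p C0
        by (auto simp: contacts_def intro: mult_left_le_one_le)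
    qed simp
    from uniform_C11_sum[where f="\<lambda>p _ t. w (fst p) (snd p) *\<^sub>R hF p t"
        and f'="\<lambda>p _ t v. w (fst p) (snd p) *\<^sub>R hF' p t v", OF contacts_finite this C0]
    show ?thesis unfolding Fc_sum[abs_def] dF_def[abs_def] by simp
  qed
  then show ?thesis using that by blast
qed

lemma Bop_C11:
  obtains CB where "\<And>w. feasible P w \<Longrightarrow> C11_on Bl (\<lambda>t. Bop P t w) (\<lambda>t v. dB t v - dF w t v) CB"
    and "\<And>w t. feasible P w \<Longrightarrow> t \<in> Bl \<Longrightarrow> norm (Fc P t w) \<le> CB"
proof -
  obtain C where "uniform_C11 (rR P) Bl hB hB' C" using hB_C11 by blast
  from uniform_C11_integral[OF this R_compact mass_measurable mass_bounds Bl_open Bl_convex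
      integrands_continuous(3,4)]
  obtain Cp where Cp: "C11_on Bl (\<lambda>t. integral (rR P) (\<lambda>x. mass x *\<^sub>R hB x t)) dB Cp"
    unfolding dB_def[abs_def] by blast
  obtain CF where CF: "\<And>w. feasible P w \<Longrightarrow> C11_on Bl (\<lambda>t. Fc P t w) (dF w) CF"
    using Fc_C11 by blast
  have Cp0: "Cp \<ge> 0" and CF0: "CF \<ge> 0"
    using uniform_C11_nonneg[OF Cp] uniform_C11_nonneg[OF CF[of "\<lambda>x j. 0"]] by (auto simp: feasible_def)
  define C1 where "C1 = Cp + CF + norm (tau P)"
  have C1: "Cp \<le> C1" "CF \<le> C1" "norm (tau P) \<le> 2 * C1" "0 \<le> 2 * C1"
    using Cp0 CF0 by (auto simp: C1_def)
  have "C11_on Bl (\<lambda>t. Bop P t w) (\<lambda>t v. dB t v - dF w t v) (4 * C1)" if w: "feasible P w" for w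
  proof -
    have "C11_on Bl (\<lambda>t. integral (rR P) (\<lambda>x. mass x *\<^sub>R hB x t) - Fc P t w - tau P)
        (\<lambda>t v. dB t v - dF w t v - 0) (2 * (2 * C1))"
      using uniform_C11_mono[OF Cp C1(1)] uniform_C11_mono[OF CF[OF w] C1(2)]
        uniform_C11_const[OF C1(4), of UNIV "\<lambda>_. tau P"] C1(3)
      by (intro uniform_C11_diff) auto
    then show ?thesis by (simp add: Bop_integral)
  qed
  moreover have "norm (Fc P t w) \<le> 4 * C1" if "feasible P w" "t \<in> Bl" for w t
    using uniform_C11_bound[OF CF[OF that(1)] UNIV_I that(2)] C1 by simp
  ultimately show ?thesis using that by blast
qed

definition d2K where
  "d2K k t v = integral (rR P) (\<lambda>x. mass x *\<^sub>R
     (inner (dX x t v) (dX x t (axis k 1)) + inner (disp x t) (d2X x t (axis k 1) v)))"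

lemma dK_axis_has_derivative:
  assumes t: "t \<in> Bl"
  shows "((\<lambda>t. dK t (axis k 1)) has_derivative d2K k t) (at t)"
proof -
  obtain C where X: "uniform_C11 (rR P) Bl (\<lambda>x. rX P x) dX C"
    and dX: "uniform_C11 (rR P) Bl (\<lambda>x t. dX x t (axis k 1)) (\<lambda>x t. d2X x t (axis k 1)) C"
    using kinematics_C11 by blast
  have "uniform_C11 (rR P) Bl (\<lambda>x t. dX x t (axis k 1)) (\<lambda>x t. d2X x t (axis k 1)) (2 * C)"
    by (rule uniform_C11_mono[OF dX]) (use uniform_C11_nonneg[OF X] in auto)
  from uniform_C11_inner[OF disp_C11[OF X] this Bl_convex]
  have "uniform_C11 (rR P) Bl (\<lambda>x t. inner (disp x t) (dX x t (axis k 1)))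
      (\<lambda>x t v. inner (dX x t v) (dX x t (axis k 1)) + inner (disp x t) (d2X x t (axis k 1) v)) (4 * (2 * C)\<^sup>2)" .
  moreover have "continuous_on (rR P) (\<lambda>x. inner (disp x t) (dX x t (axis k 1)))"
    and "continuous_on (rR P) (\<lambda>x. inner (dX x t v) (dX x t (axis k 1)) + inner (disp x t) (d2X x t (axis k 1) v))"
    for t v
    unfolding disp_def by (intro continuous_intros continuous_on_rX continuous_on_dX continuous_on_d2X)+
  ultimately have "C11_on Bl (\<lambda>t. dK t (axis k 1)) (d2K k) (4 * (2 * C)\<^sup>2 * integral (rR P) mass)"
    unfolding dK_def hK'_def d2K_def[abs_def]
    by (rule uniform_C11_integral[OF _ R_compact mass_measurable mass_bounds Bl_open Bl_convex])
  from uniform_C11_has_derivative[OF this UNIV_I t] show ?thesis .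
qed

lemma DK_eq: "t \<in> Bl \<Longrightarrow> DK P t u = dK t u"
  unfolding DK_def frechet_derivative_at[OF Kop_has_derivative, symmetric] ..

lemma DK_eq_sum: "t \<in> Bl \<Longrightarrow> DK P t u = (\<Sum>k\<in>UNIV. u$k * dK t (axis k 1))"
  using DK_eq linear_eq_sum_axis[OF has_derivative_linear[OF Kop_has_derivative]] by simp

lemma D2K_eq_sum: "t \<in> Bl \<Longrightarrow> D2K P t u v = (\<Sum>k\<in>UNIV. u$k * d2K k t v)"
proof -
  assume t: "t \<in> Bl"
  have "((\<lambda>s. \<Sum>k\<in>UNIV. u$k * dK s (axis k 1)) has_derivative (\<lambda>v. \<Sum>k\<in>UNIV. u$k * d2K k t v)) (at t)"
    by (intro has_derivative_sum has_derivative_mult_right dK_axis_has_derivative[OF t])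
  then have "((\<lambda>s. DK P s u) has_derivative (\<lambda>v. \<Sum>k\<in>UNIV. u$k * d2K k t v)) (at t)"
    by (rule has_derivative_transform_within_open[OF _ Bl_open t]) (simp add: DK_eq_sum)
  then show ?thesis unfolding D2K_def by (simp add: frechet_derivative_at[symmetric])
qed

lemma Fc_continuous_weights: "continuous_on UNIV (\<lambda>dw. Fc P t dw)"
  unfolding Fc_sum by (intro continuous_intros continuous_on_eval2)

end

section \<open>Nondegenerate inertia and small step sizes\<close>

locale robot_nondegenerate = robot_regular +
  fixes \<sigma>X :: real
  assumes \<sigma>X_pos: "\<sigma>X > 0"
    and \<sigma>X_le_sigma_min: "sigma_min (integral (rR P) (\<lambda>x. (rho P x / (dt P)\<^sup>2) *\<^sub>R
          (transpose (DX P x (thm1 P)) ** DX P x (thm1 P)))) \<ge> \<sigma>X"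
begin

lemma DX_eq_matrix: "x \<in> rR P \<Longrightarrow> DX P x t = matrix (dX x t)"
  unfolding DX_def jacobian_def using frechet_derivative_at[OF rX_has_derivative] by metis

lemma DX_gram_continuous: "continuous_on (rR P) (\<lambda>x. transpose (DX P x t) ** DX P x t)"
proof -
  have "continuous_on (rR P) (\<lambda>x. (\<chi> i j. \<Sum>k\<in>UNIV. dX x t (axis i 1) $ k * dX x t (axis j 1) $ k))"
    by (intro continuous_intros continuous_on_dX)
  then show ?thesis
    by (rule continuous_on_eq)
       (simp add: DX_eq_matrix vec_eq_iff matrix_matrix_mult_def transpose_def matrix_def)
qed

lemma gram_integral_mult: "(integral (rR P) (\<lambda>x. (rho P x / (dt P)\<^sup>2) *\<^sub>R
      (transpose (DX P x (thm1 P)) ** DX P x (thm1 P)))) *v v = dA (thm1 P) v"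
proof -
  have "(\<lambda>x. mass x *\<^sub>R (transpose (DX P x (thm1 P)) ** DX P x (thm1 P))) integrable_on rR P"
    using mass_bounds
    by (intro integrable_bounded_measurable_scaleR_continuous[OF R_compact mass_measurable _ DX_gram_continuous])
       auto
  from integral_linear[OF this bounded_linear_matrix_vector_mult_left]
  have "(integral (rR P) (\<lambda>x. mass x *\<^sub>R (transpose (DX P x (thm1 P)) ** DX P x (thm1 P)))) *v v
      = integral (rR P) (\<lambda>x. (mass x *\<^sub>R (transpose (DX P x (thm1 P)) ** DX P x (thm1 P))) *v v)"
    by (simp add: o_def)
  also have "\<dots> = dA (thm1 P) v"
    unfolding dA_def
  proof (rule integral_cong)
    fix x assume x: "x \<in> rR P"
    have lin: "linear (dX x (thm1 P))" using rX_has_derivative[OF x] has_derivative_linear by blast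
    have "(transpose (DX P x (thm1 P)) ** DX P x (thm1 P)) *v v = DX P x (thm1 P) *v v v* DX P x (thm1 P)"
      by (simp add: matrix_vector_mul_assoc[symmetric])
    also have "\<dots> = hA' x (thm1 P) v"
      using matrix_vector_mul(2)[OF lin] DX_transpose_mult[OF x]
      by (simp add: DX_eq_matrix[OF x] hA'_def disp_def fun_eq_iff)
    finally show "(mass x *\<^sub>R (transpose (DX P x (thm1 P)) ** DX P x (thm1 P))) *v v = mass x *\<^sub>R hA' x (thm1 P) v"
      by (simp add: scaleR_matrix_vector_assoc[symmetric])
  qed
  finally show ?thesis by (simp add: mass_def)
qed

lemma dA_lower_bound: "\<sigma>X * norm v \<le> norm (dA (thm1 P) v)"
  using order_trans[OF mult_right_mono[OF \<sigma>X_le_sigma_min norm_ge_zero] sigma_min_mult_le]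
  unfolding gram_integral_mult .

end

text \<open>\<open>CA\<close> and \<open>CB\<close> are \<open>C\<^sup>1\<^sup>,\<^sup>1\<close> constants of \<open>Aop P\<close> and of \<open>Bop P\<close> (uniformly over feasible
  weights); \<open>\<rho>0\<close> is the radius of the ball around \<open>thm1 P\<close> on which the Jacobian of \<open>Gop\<close> stays
  invertible, and \<open>g0\<close> bounds the initial residual of every projection.\<close>

locale small_step = robot_nondegenerate +
  fixes CA CB \<rho>0 g0 \<alpha> :: real
  assumes Aop_C11_CA: "C11_on Bl (Aop P) dA CA"
    and Bop_C11_CB: "\<And>w. feasible P w \<Longrightarrow> C11_on Bl (\<lambda>t. Bop P t w) (\<lambda>t v. dB t v - dF w t v) CB"
    and Fc_bound_CB: "\<And>w t. feasible P w \<Longrightarrow> t \<in> Bl \<Longrightarrow> norm (Fc P t w) \<le> CB"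
    and \<rho>0_pos: "0 < \<rho>0" and \<rho>0_le_1: "\<rho>0 \<le> 1" and CA_\<rho>0: "CA * \<rho>0 \<le> \<sigma>X / 2"
    and g0_ge: "2 * CB \<le> g0"
    and \<alpha>_pos: "0 < \<alpha>" and \<alpha>_le_1: "\<alpha> \<le> 1" and \<alpha>_CB: "\<alpha> * (4 * (CB + 1)) \<le> \<sigma>X"
    and \<alpha>_newton: "32 * (CA + CB) * g0 * \<alpha> \<le> \<sigma>X\<^sup>2"
    and \<alpha>_radius: "\<alpha> * (2 * CB + 8 * g0) < \<rho>0 * \<sigma>X"
begin

definition DG where "DG w t v = (1/\<alpha>) *\<^sub>R dA t v + (dB t v - dF w t v)"

definition proj_radius where "proj_radius = 2 * \<alpha> * CB / \<sigma>X"

lemma CA_nonneg: "CA \<ge> 0"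
  using uniform_C11_nonneg[OF Aop_C11_CA] .

lemma CB_nonneg: "CB \<ge> 0"
  using uniform_C11_nonneg[OF Bop_C11_CB[of "\<lambda>x j. 0"]] by (simp add: feasible_def)

lemma ball_\<rho>0_subset_Bl: "ball (thm1 P) \<rho>0 \<subseteq> Bl"
  using \<rho>0_le_1 by (auto simp: Bl_def)

lemma proj_radius_margin: "proj_radius + 8 * \<alpha> * g0 / \<sigma>X < \<rho>0"
proof -
  have "proj_radius + 8 * \<alpha> * g0 / \<sigma>X = \<alpha> * (2 * CB + 8 * g0) / \<sigma>X"
    by (simp add: proj_radius_def field_simps add_divide_distrib)
  also have "\<dots> < \<rho>0" using \<alpha>_radius \<sigma>X_pos by (simp add: field_simps)
  finally show ?thesis .
qed

lemma proj_radius_lt: "proj_radius < \<rho>0"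
  using proj_radius_margin \<alpha>_pos \<sigma>X_pos g0_ge CB_nonneg by (smt (verit) divide_nonneg_pos mult_nonneg_nonneg)

lemma in_ball_of_proj_radius: "norm (t - thm1 P) \<le> proj_radius \<Longrightarrow> t \<in> ball (thm1 P) \<rho>0"
  using proj_radius_lt by (simp add: dist_norm norm_minus_commute)

lemma dA_lower_bound_near:
  assumes t: "t \<in> ball (thm1 P) \<rho>0"
  shows "\<sigma>X / 2 * norm v \<le> norm (dA t v)"
proof -
  have "norm (dA t v - dA (thm1 P) v) \<le> CA * norm (t - thm1 P) * norm v"
    using uniform_C11_derivative_lipschitz[OF Aop_C11_CA UNIV_I _ thm1_in_Bl] t ball_\<rho>0_subset_Bl by blast
  also have "\<dots> \<le> \<sigma>X / 2 * norm v"
  proof (rule mult_right_mono)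
    have "CA * norm (t - thm1 P) \<le> CA * \<rho>0"
      using t CA_nonneg by (intro mult_left_mono) (auto simp: dist_norm norm_minus_commute)
    then show "CA * norm (t - thm1 P) \<le> \<sigma>X / 2" using CA_\<rho>0 by linarith
  qed simp
  finally show ?thesis
    using dA_lower_bound[of v] norm_triangle_ineq2[of "dA (thm1 P) v" "dA t v"]
      norm_minus_commute[of "dA t v" "dA (thm1 P) v"]
    by linarith
qed

lemma Aop_lower_bound_near:
  assumes t: "t \<in> ball (thm1 P) \<rho>0"
  shows "\<sigma>X / 2 * norm (t - thm1 P) \<le> norm (Aop P t)"
proof -
  define d where "d = t - thm1 P"
  have "norm d < \<rho>0" using t by (simp add: d_def dist_norm norm_minus_commute)
  have "norm (Aop P t - dA (thm1 P) d) \<le> CA * (norm d)\<^sup>2"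
    using uniform_C11_remainder[OF Aop_C11_CA Bl_convex UNIV_I thm1_in_Bl] t ball_\<rho>0_subset_Bl Aop_thm1
    by (auto simp: d_def)
  also have "\<dots> \<le> \<sigma>X / 2 * norm d"
  proof -
    have "CA * norm d \<le> CA * \<rho>0" using \<open>norm d < \<rho>0\<close> CA_nonneg by (intro mult_left_mono) auto
    then have "CA * norm d \<le> \<sigma>X / 2" using CA_\<rho>0 by linarith
    from mult_right_mono[OF this norm_ge_zero[of d]] show ?thesis by (simp add: power2_eq_square mult.assoc)
  qed
  finally show ?thesis
    using dA_lower_bound[of d] norm_triangle_ineq2[of "dA (thm1 P) d" "Aop P t"]
      norm_minus_commute[of "Aop P t" "dA (thm1 P) d"]
    by (simp add: d_def)
qed

context
  fixes w assumes w: "feasible P w"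
begin

lemma Gop_has_derivative:
  "t \<in> ball (thm1 P) \<rho>0 \<Longrightarrow> ((\<lambda>t. Gop P \<alpha> t w) has_derivative DG w t) (at t)"
  unfolding Gop_def[abs_def] DG_def[abs_def] using ball_\<rho>0_subset_Bl
  by (intro has_derivative_add has_derivative_scaleR_right
      uniform_C11_has_derivative[OF Aop_C11_CA UNIV_I] uniform_C11_has_derivative[OF Bop_C11_CB[OF w] UNIV_I])
    auto

lemma DG_lower_bound:
  assumes t: "t \<in> ball (thm1 P) \<rho>0"
  shows "\<sigma>X / (4 * \<alpha>) * norm v \<le> norm (DG w t v)"
proof -
  have "norm (dB t v - dF w t v) \<le> CB * norm v"
    using uniform_C11_derivative_bound[OF Bop_C11_CB[OF w] UNIV_I] t ball_\<rho>0_subset_Bl by blast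
  also have "\<dots> \<le> \<sigma>X / (4 * \<alpha>) * norm v"
    using \<alpha>_CB \<alpha>_pos CB_nonneg by (intro mult_right_mono) (simp_all add: field_simps)
  finally have "norm (dB t v - dF w t v) \<le> \<sigma>X / (4 * \<alpha>) * norm v" .
  moreover have "2 * (\<sigma>X / (4 * \<alpha>) * norm v) \<le> norm ((1/\<alpha>) *\<^sub>R dA t v)"
    using mult_left_mono[OF dA_lower_bound_near[OF t, of v], of "1/\<alpha>"] \<alpha>_pos by (simp add: field_simps)
  moreover have "norm ((1/\<alpha>) *\<^sub>R dA t v) - norm (dB t v - dF w t v) \<le> norm (DG w t v)"
    unfolding DG_def by (metis norm_diff_ineq diff_minus_eq_add norm_minus_cancel)
  ultimately show ?thesis by linarith
qed

lemma Gop_remainder: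
  assumes t: "t \<in> ball (thm1 P) \<rho>0" and s: "s \<in> ball (thm1 P) \<rho>0"
  shows "norm (Gop P \<alpha> s w - Gop P \<alpha> t w - DG w t (s - t)) \<le> (CA + CB) / \<alpha> * (norm (s - t))\<^sup>2"
proof -
  have tB: "t \<in> Bl" and sB: "s \<in> Bl" using t s ball_\<rho>0_subset_Bl by auto
  have "Gop P \<alpha> s w - Gop P \<alpha> t w - DG w t (s - t)
      = (1/\<alpha>) *\<^sub>R (Aop P s - Aop P t - dA t (s - t))
        + (Bop P s w - Bop P t w - (dB t (s - t) - dF w t (s - t)))"
    by (simp add: Gop_def DG_def algebra_simps)
  also have "norm \<dots> \<le> (1/\<alpha>) * (CA * (norm (s - t))\<^sup>2) + CB * (norm (s - t))\<^sup>2"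
    using uniform_C11_remainder[OF Aop_C11_CA Bl_convex UNIV_I tB sB]
      uniform_C11_remainder[OF Bop_C11_CB[OF w] Bl_convex UNIV_I tB sB] \<alpha>_pos
    by (intro order_trans[OF norm_triangle_ineq add_mono]) (simp_all add: divide_right_mono)
  also have "\<dots> \<le> (CA + CB) / \<alpha> * (norm (s - t))\<^sup>2"
  proof -
    have "CB \<le> CB / \<alpha>" using \<alpha>_pos \<alpha>_le_1 CB_nonneg by (simp add: field_simps mult_left_le)
    then have "CB * (norm (s - t))\<^sup>2 \<le> CB / \<alpha> * (norm (s - t))\<^sup>2" by (rule mult_right_mono) simp
    then show ?thesis by (simp add: field_simps add_divide_distrib)
  qed
  finally show ?thesis .
qed

lemma dGth_eq_DG: "t \<in> ball (thm1 P) \<rho>0 \<Longrightarrow> dGth P \<alpha> t w = DG w t"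
  unfolding dGth_def using frechet_derivative_at[OF Gop_has_derivative] by simp

lemma dGth_ok_near: "t \<in> ball (thm1 P) \<rho>0 \<Longrightarrow> dGth_ok P \<alpha> t w"
  unfolding dGth_ok_def dGth_eq_DG
  using Gop_has_derivative differentiableI \<sigma>X_pos \<alpha>_pos
  by (metis linear_bij_of_norm_lower_bound has_derivative_linear DG_lower_bound divide_pos_pos
      mult_pos_pos zero_less_numeral)

lemma Gop_zero_near_thm1:
  assumes t: "t \<in> ball (thm1 P) \<rho>0" and G0: "Gop P \<alpha> t w = 0"
  shows "norm (t - thm1 P) \<le> proj_radius"
proof -
  have "Aop P t = - \<alpha> *\<^sub>R Bop P t w"
    using G0 \<alpha>_pos unfolding Gop_def by (simp add: add_eq_0_iff2 scaleR_eq_iff field_simps)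
  then have "norm (Aop P t) \<le> \<alpha> * CB"
    using uniform_C11_bound[OF Bop_C11_CB[OF w] UNIV_I] t ball_\<rho>0_subset_Bl \<alpha>_pos
    by (auto simp: mult_left_mono)
  then have "\<sigma>X / 2 * norm (t - thm1 P) \<le> \<alpha> * CB" using Aop_lower_bound_near[OF t] by linarith
  then show ?thesis using \<sigma>X_pos by (simp add: proj_radius_def field_simps)
qed

lemma newton_setting_Gop:
  "newton_setting (\<lambda>t. Gop P \<alpha> t w) (DG w) (ball (thm1 P) \<rho>0) (\<sigma>X / (4 * \<alpha>)) ((CA + CB) / \<alpha>)"
  using Gop_has_derivative DG_lower_bound Gop_remainder \<sigma>X_pos \<alpha>_pos CA_nonneg CB_nonneg
  by unfold_locales auto

end

lemma newton_projection:
  assumes w: "feasible P w" and t0: "norm (t0 - thm1 P) \<le> proj_radius"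
    and g: "norm (Gop P \<alpha> t0 w) \<le> g0" and th0: "th 0 = t0"
    and step: "\<And>i. th i \<in> ball (thm1 P) \<rho>0 \<Longrightarrow> Gop P \<alpha> (th i) w \<noteq> 0 \<Longrightarrow>
                 th (Suc i) = th i - inv (dGth P \<alpha> (th i) w) (Gop P \<alpha> (th i) w)"
    and stay: "\<And>i. Gop P \<alpha> (th i) w = 0 \<Longrightarrow> th (Suc i) = th i"
  shows "th i \<in> ball (thm1 P) \<rho>0"
    and "Vop P \<alpha> (th (Suc i)) w \<le> 3/4 * Vop P \<alpha> (th i) w"
    and "\<exists>l. th \<longlonglongrightarrow> l \<and> Gop P \<alpha> l w = 0 \<and> norm (l - thm1 P) \<le> proj_radius"
proof -
  interpret N: newton_setting "\<lambda>t. Gop P \<alpha> t w" "DG w" "ball (thm1 P) \<rho>0" "\<sigma>X / (4 * \<alpha>)" "(CA + CB) / \<alpha>"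
    by (rule newton_setting_Gop[OF w])
  have radius: "2 * g0 / (\<sigma>X / (4 * \<alpha>)) = 8 * \<alpha> * g0 / \<sigma>X" by (simp add: field_simps)
  have sub: "cball t0 (2 * g0 / (\<sigma>X / (4 * \<alpha>))) \<subseteq> ball (thm1 P) \<rho>0"
  proof
    fix x assume "x \<in> cball t0 (2 * g0 / (\<sigma>X / (4 * \<alpha>)))"
    then have "norm (x - t0) \<le> 8 * \<alpha> * g0 / \<sigma>X" unfolding radius by (simp add: dist_norm norm_minus_commute)
    then show "x \<in> ball (thm1 P) \<rho>0"
      using t0 proj_radius_margin norm_triangle_ineq[of "x - t0" "t0 - thm1 P"]
      by (simp add: dist_norm norm_minus_commute)
  qed
  have small: "(CA + CB) / \<alpha> * g0 \<le> (\<sigma>X / (4 * \<alpha>))\<^sup>2 / 2"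
  proof -
    have "(CA + CB) / \<alpha> * g0 = (CA + CB) * g0 * \<alpha> / \<alpha>\<^sup>2" by (simp add: power2_eq_square)
    also have "\<dots> \<le> \<sigma>X\<^sup>2 / 32 / \<alpha>\<^sup>2" using \<alpha>_newton \<alpha>_pos by (intro divide_right_mono) (simp_all add: algebra_simps)
    also have "\<dots> = (\<sigma>X / (4 * \<alpha>))\<^sup>2 / 2" by (simp add: power2_eq_square field_simps)
    finally show ?thesis .
  qed
  have step': "th (Suc i) = th i - inv (DG w (th i)) (Gop P \<alpha> (th i) w)"
    if "th i \<in> ball (thm1 P) \<rho>0" "Gop P \<alpha> (th i) w \<noteq> 0" for i
    using step[OF that] dGth_eq_DG[OF w that(1)] by simp
  note newton = N.newton_iterates_in_S N.newton_residual_halves N.newton_converges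
  note newton = newton[OF sub g small th0 step' stay]
  show "th i \<in> ball (thm1 P) \<rho>0" by (rule newton(1))
  have "(norm (Gop P \<alpha> (th (Suc i)) w))\<^sup>2 \<le> (norm (Gop P \<alpha> (th i) w) / 2)\<^sup>2"
    using newton(2) by (intro power_mono) auto
  also have "\<dots> \<le> 3/4 * (norm (Gop P \<alpha> (th i) w))\<^sup>2" by (simp add: power2_eq_square)
  finally show "Vop P \<alpha> (th (Suc i)) w \<le> 3/4 * Vop P \<alpha> (th i) w" by (simp add: Vop_def)
  obtain l where "th \<longlonglongrightarrow> l" "l \<in> cball t0 (2 * g0 / (\<sigma>X / (4 * \<alpha>)))" "Gop P \<alpha> l w = 0"
    using newton(3) by blast
  then show "\<exists>l. th \<longlonglongrightarrow> l \<and> Gop P \<alpha> l w = 0 \<and> norm (l - thm1 P) \<le> proj_radius"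
    using Gop_zero_near_thm1[OF w] sub by blast
qed

lemma projection_bounds:
  assumes w: "feasible P w" and t0: "norm (t0 - thm1 P) \<le> proj_radius"
    and g: "norm (Gop P \<alpha> t0 w) \<le> g0" and pr: "projection P \<alpha> w t0 th l"
  shows "Vop P \<alpha> (th 0) w \<le> g0\<^sup>2"
    and "Vop P \<alpha> (th (Suc i)) w \<le> 3/4 * Vop P \<alpha> (th i) w"
    and "Gop P \<alpha> l w = 0" and "norm (l - thm1 P) \<le> proj_radius"
proof -
  have th0: "th 0 = t0" using pr by (simp add: projection_def)
  have step: "\<And>i. th i \<in> ball (thm1 P) \<rho>0 \<Longrightarrow> Gop P \<alpha> (th i) w \<noteq> 0 \<Longrightarrow>
      th (Suc i) = th i - inv (dGth P \<alpha> (th i) w) (Gop P \<alpha> (th i) w)"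
    and stay: "\<And>i. Gop P \<alpha> (th i) w = 0 \<Longrightarrow> th (Suc i) = th i"
    using pr unfolding projection_def by (metis (full_types))+
  note newton = newton_projection[OF w t0 g th0 step stay]
  show "Vop P \<alpha> (th 0) w \<le> g0\<^sup>2" using g th0 by (simp add: Vop_def power_mono)
  show "Vop P \<alpha> (th (Suc i)) w \<le> 3/4 * Vop P \<alpha> (th i) w" by (rule newton(2))
  obtain l' where "th \<longlonglongrightarrow> l'" "Gop P \<alpha> l' w = 0" "norm (l' - thm1 P) \<le> proj_radius"
    using newton(3) by blast
  moreover have "th \<longlonglongrightarrow> l" using pr by (simp add: projection_def)
  ultimately show "Gop P \<alpha> l w = 0" and "norm (l - thm1 P) \<le> proj_radius"
    using LIMSEQ_unique by blast+
qed

lemma Gop_initial_bound: "norm (Gop P \<alpha> (thm1 P) (\<lambda>x j. 0)) \<le> g0"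
proof -
  have "Gop P \<alpha> (thm1 P) (\<lambda>x j. 0) = Bop P (thm1 P) (\<lambda>x j. 0)"
    by (simp add: Gop_def Aop_thm1)
  moreover have "norm (Bop P (thm1 P) (\<lambda>x j. 0)) \<le> CB"
    using uniform_C11_bound[OF Bop_C11_CB UNIV_I thm1_in_Bl] by (simp add: feasible_def)
  ultimately show ?thesis using g0_ge CB_nonneg by simp
qed

lemma Gop_reweight_bound:
  assumes "Gop P \<alpha> t w1 = 0" and "feasible P w1" and "feasible P w2" and "t \<in> Bl"
  shows "norm (Gop P \<alpha> t w2) \<le> g0"
proof -
  have "Gop P \<alpha> t w2 = Gop P \<alpha> t w2 - Gop P \<alpha> t w1" using assms(1) by simp
  also have "\<dots> = Fc P t w1 - Fc P t w2" by (simp add: Gop_def Bop_def)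
  finally have "norm (Gop P \<alpha> t w2) \<le> norm (Fc P t w1) + norm (Fc P t w2)" by (simp add: norm_triangle_ineq4)
  also have "\<dots> \<le> CB + CB" using Fc_bound_CB assms(2-4) by (intro add_mono) auto
  finally show ?thesis using g0_ge by simp
qed

lemma qp_obj_continuous:
  assumes w: "feasible P w" and \<theta>: "\<theta> \<in> ball (thm1 P) \<rho>0"
  shows "continuous_on UNIV (qp_obj P \<alpha> \<gamma> \<theta> w)"
proof -
  have \<theta>B: "\<theta> \<in> Bl" using \<theta> ball_\<rho>0_subset_Bl by blast
  have "bij (DG w \<theta>)" using dGth_ok_near[OF w \<theta>] dGth_eq_DG[OF w \<theta>] by (simp add: dGth_ok_def)
  moreover have "bounded_linear (DG w \<theta>)" using Gop_has_derivative[OF w \<theta>] has_derivative_bounded_linear by blast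
  ultimately have inv: "bounded_linear (inv (DG w \<theta>))"
    using inj_linear_imp_inv_bounded_linear bij_is_inj by blast
  define J where "J dw = inv (DG w \<theta>) (- Fc P \<theta> dw)" for dw
  have "continuous_on UNIV J"
    unfolding J_def[abs_def] by (intro bounded_linear.continuous_on[OF inv] continuous_intros Fc_continuous_weights)
  moreover have "bounded_linear (dK \<theta>)" "bounded_linear (d2K k \<theta>)" for k
    using Kop_has_derivative[OF \<theta>B] dK_axis_has_derivative[OF \<theta>B] has_derivative_bounded_linear by blast+
  ultimately have "continuous_on UNIV (\<lambda>dw. - dK \<theta> (J dw) + 1/2 * (\<Sum>k\<in>UNIV. J dw $ k * d2K k \<theta> (J dw))
      + (1/\<gamma>) * wnorm2 P dw)"
    unfolding wnorm2_def
    by (intro continuous_intros continuous_on_eval2 bounded_linear.continuous_on[of "dK \<theta>"]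
        bounded_linear.continuous_on[of "d2K _ \<theta>"]) auto
  moreover have "qp_obj P \<alpha> \<gamma> \<theta> w dw
      = - dK \<theta> (J dw) + 1/2 * (\<Sum>k\<in>UNIV. J dw $ k * d2K k \<theta> (J dw)) + (1/\<gamma>) * wnorm2 P dw" for dw
    by (simp add: qp_obj_def Jmap_def dGw_def dGth_eq_DG[OF w \<theta>] J_def DK_eq[OF \<theta>B] D2K_eq_sum[OF \<theta>B])
  ultimately show ?thesis by simp
qed

lemma qp_minimizer_exists:
  assumes w: "feasible P w" and \<theta>: "\<theta> \<in> ball (thm1 P) \<rho>0"
  shows "\<exists>dw\<in>qp_dom P w. \<forall>d\<in>qp_dom P w. qp_obj P \<alpha> \<gamma> \<theta> w dw \<le> qp_obj P \<alpha> \<gamma> \<theta> w d"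
proof -
  have "(\<lambda>x j. 0) \<in> qp_dom P w" using w by (simp add: qp_dom_def supp_ok_def)
  then show ?thesis
    using continuous_attains_inf[OF qp_dom_compact[OF w] _ continuous_on_subset[OF qp_obj_continuous[OF w \<theta>]]]
    by blast
qed

definition newton_map where
  "newton_map w t = (if Gop P \<alpha> t w = 0 then t else t - inv (dGth P \<alpha> t w) (Gop P \<alpha> t w))"

definition newton_seq where "newton_seq w t0 i = (newton_map w ^^ i) t0"

lemma newton_seq_projection:
  assumes w: "feasible P w" and t0: "norm (t0 - thm1 P) \<le> proj_radius" and g: "norm (Gop P \<alpha> t0 w) \<le> g0"
  shows "projection P \<alpha> w t0 (newton_seq w t0) (lim (newton_seq w t0))"
    and "Gop P \<alpha> (lim (newton_seq w t0)) w = 0"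
    and "norm (lim (newton_seq w t0) - thm1 P) \<le> proj_radius"
proof -
  have Suc: "newton_seq w t0 (Suc i) = newton_map w (newton_seq w t0 i)" for i
    by (simp add: newton_seq_def)
  have "newton_seq w t0 0 = t0" by (simp add: newton_seq_def)
  have step: "newton_seq w t0 (Suc i) = newton_seq w t0 i - inv (dGth P \<alpha> (newton_seq w t0 i) w) (Gop P \<alpha> (newton_seq w t0 i) w)"
    if "Gop P \<alpha> (newton_seq w t0 i) w \<noteq> 0" for i
    using that by (simp add: Suc newton_map_def)
  have stay: "newton_seq w t0 (Suc i) = newton_seq w t0 i" if "Gop P \<alpha> (newton_seq w t0 i) w = 0" for i
    using that by (simp add: Suc newton_map_def)
  note newton = newton_projection[OF w t0 g \<open>newton_seq w t0 0 = t0\<close> step stay]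
  obtain l where l: "newton_seq w t0 \<longlonglongrightarrow> l" "Gop P \<alpha> l w = 0" "norm (l - thm1 P) \<le> proj_radius"
    using newton(3) by blast
  have lim: "lim (newton_seq w t0) = l" using l(1) by (rule limI)
  show "Gop P \<alpha> (lim (newton_seq w t0)) w = 0" "norm (lim (newton_seq w t0) - thm1 P) \<le> proj_radius"
    using l lim by simp_all
  have "dGth_ok P \<alpha> (newton_seq w t0 i) w" for i using dGth_ok_near[OF w newton(1)] .
  then show "projection P \<alpha> w t0 (newton_seq w t0) (lim (newton_seq w t0))"
    unfolding projection_def using l(1) lim step stay \<open>newton_seq w t0 0 = t0\<close> by auto
qed

definition qp_step where
  "qp_step \<gamma> \<theta> w = (SOME dw. dw \<in> qp_dom P w \<and> (\<forall>d\<in>qp_dom P w. qp_obj P \<alpha> \<gamma> \<theta> w dw \<le> qp_obj P \<alpha> \<gamma> \<theta> w d))"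

lemma qp_step_minimizes:
  assumes "feasible P w" and "norm (\<theta> - thm1 P) \<le> proj_radius"
  shows "qp_step \<gamma> \<theta> w \<in> qp_dom P w"
    and "\<forall>d\<in>qp_dom P w. qp_obj P \<alpha> \<gamma> \<theta> w (qp_step \<gamma> \<theta> w) \<le> qp_obj P \<alpha> \<gamma> \<theta> w d"
proof -
  have "qp_step \<gamma> \<theta> w \<in> qp_dom P w \<and>
      (\<forall>d\<in>qp_dom P w. qp_obj P \<alpha> \<gamma> \<theta> w (qp_step \<gamma> \<theta> w) \<le> qp_obj P \<alpha> \<gamma> \<theta> w d)"
    using qp_minimizer_exists[OF assms(1) in_ball_of_proj_radius[OF assms(2)], of \<gamma>]
    unfolding qp_step_def by (rule someI2_bex) blast
  then show "qp_step \<gamma> \<theta> w \<in> qp_dom P w"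
    and "\<forall>d\<in>qp_dom P w. qp_obj P \<alpha> \<gamma> \<theta> w (qp_step \<gamma> \<theta> w) \<le> qp_obj P \<alpha> \<gamma> \<theta> w d"
    by blast+
qed

definition tentative_weights where "tentative_weights \<gamma> \<theta> w = (\<lambda>x j. w x j + qp_step \<gamma> \<theta> w x j)"

lemma tentative_weights:
  assumes w: "feasible P w" and \<theta>: "norm (\<theta> - thm1 P) \<le> proj_radius" and G0: "Gop P \<alpha> \<theta> w = 0"
  shows "feasible P (tentative_weights \<gamma> \<theta> w)" and "norm (Gop P \<alpha> \<theta> (tentative_weights \<gamma> \<theta> w)) \<le> g0"
proof -
  show wt: "feasible P (tentative_weights \<gamma> \<theta> w)"
    using qp_step_minimizes(1)[OF w \<theta>] by (simp add: qp_dom_def tentative_weights_def)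
  have "\<theta> \<in> Bl" using in_ball_of_proj_radius[OF \<theta>] ball_\<rho>0_subset_Bl by blast
  then show "norm (Gop P \<alpha> \<theta> (tentative_weights \<gamma> \<theta> w)) \<le> g0" by (rule Gop_reweight_bound[OF G0 w wt])
qed

definition pgm_update where
  "pgm_update \<eta> s = (case s of (\<theta>, w, \<gamma>) \<Rightarrow>
     let wt = tentative_weights \<gamma> \<theta> w; tt = lim (newton_seq wt \<theta>) in
     if Kop P tt > Kop P \<theta> then (\<theta>, w, \<eta> * \<gamma>) else (tt, wt, \<gamma> / \<eta>))"

definition pgm_state where
  "pgm_state \<eta> k = (pgm_update \<eta> ^^ k) (lim (newton_seq (\<lambda>x j. 0) (thm1 P)), (\<lambda>x j. 0), 1)"

lemma initial_newton_seq:
  "projection P \<alpha> (\<lambda>x j. 0) (thm1 P) (newton_seq (\<lambda>x j. 0) (thm1 P)) (lim (newton_seq (\<lambda>x j. 0) (thm1 P)))"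
  "Gop P \<alpha> (lim (newton_seq (\<lambda>x j. 0) (thm1 P))) (\<lambda>x j. 0) = 0"
  "norm (lim (newton_seq (\<lambda>x j. 0) (thm1 P)) - thm1 P) \<le> proj_radius"
  using newton_seq_projection[OF _ _ Gop_initial_bound] \<alpha>_pos CB_nonneg \<sigma>X_pos
  by (simp_all add: feasible_def proj_radius_def)

lemma pgm_state_invariant:
  assumes "pgm_state \<eta> k = (\<theta>, w, \<gamma>)"
  shows "norm (\<theta> - thm1 P) \<le> proj_radius \<and> Gop P \<alpha> \<theta> w = 0 \<and> feasible P w"
  using assms
proof (induction k arbitrary: \<theta> w \<gamma>)
  case 0
  then show ?case using initial_newton_seq by (auto simp: pgm_state_def feasible_def)
next
  case (Suc k)
  obtain \<theta>' w' \<gamma>' where prev: "pgm_state \<eta> k = (\<theta>', w', \<gamma>')" by (cases "pgm_state \<eta> k") auto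
  note inv = Suc.IH[OF prev]
  note wt = tentative_weights[of w' \<theta>' \<gamma>'] inv
  have "pgm_state \<eta> (Suc k) = pgm_update \<eta> (\<theta>', w', \<gamma>')" using prev by (simp add: pgm_state_def)
  then show ?case
    using Suc.prems inv newton_seq_projection(2,3)[OF wt(1) _ wt(2)] wt
    by (auto simp: pgm_update_def Let_def split: if_splits)
qed

lemma pgm_run_exists: "\<exists>th w gam tht wt pr T. pgm_run P \<alpha> \<eta> \<epsilon> th w gam tht wt pr T"
proof -
  define th where "th k = fst (pgm_state \<eta> k)" for k
  define w where "w k = fst (snd (pgm_state \<eta> k))" for k
  define gam where "gam k = snd (snd (pgm_state \<eta> k))" for k
  define wt where "wt k = tentative_weights (gam (k - 1)) (th (k - 1)) (w (k - 1))" for k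
  define tht where "tht k = lim (newton_seq (wt k) (th (k - 1)))" for k
  define pr where "pr k = (if k = 0 then newton_seq (\<lambda>x j. 0) (thm1 P) else newton_seq (wt k) (th (k - 1)))"
    for k
  define stop where "stop k \<longleftrightarrow> 1 \<le> k \<and> \<not> Kop P (tht k) > Kop P (th (k - 1)) \<and> infnorm (tht k - th (k - 1)) < \<epsilon>"
    for k
  define T where "T = (if \<exists>k. stop k then enat (LEAST k. stop k) else \<infinity>)"
  have state: "pgm_state \<eta> k = (th k, w k, gam k)" for k by (simp add: th_def w_def gam_def)
  have inv: "norm (th k - thm1 P) \<le> proj_radius" "Gop P \<alpha> (th k) (w k) = 0" "feasible P (w k)" for k
    using pgm_state_invariant[OF state] by auto
  have initial: "w 0 = (\<lambda>x j. 0)" "gam 0 = 1" "projection P \<alpha> (w 0) (thm1 P) (pr 0) (th 0)"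
    using initial_newton_seq(1) by (simp_all add: th_def w_def gam_def pr_def pgm_state_def)
  have "dGth_ok P \<alpha> (th (k - 1)) (w (k - 1)) \<and>
        (let dw = (\<lambda>x j. wt k x j - w (k - 1) x j) in
          dw \<in> qp_dom P (w (k - 1)) \<and>
          (\<forall>d\<in>qp_dom P (w (k - 1)).
              qp_obj P \<alpha> (gam (k - 1)) (th (k - 1)) (w (k - 1)) dw
                \<le> qp_obj P \<alpha> (gam (k - 1)) (th (k - 1)) (w (k - 1)) d)) \<and>
        projection P \<alpha> (wt k) (th (k - 1)) (pr k) (tht k) \<and>
        (if Kop P (tht k) > Kop P (th (k - 1))
         then gam k = \<eta> * gam (k - 1) \<and> th k = th (k - 1) \<and> w k = w (k - 1)
         else gam k = gam (k - 1) / \<eta> \<and> th k = tht k \<and> w k = wt k)" if k: "1 \<le> k" for k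
  proof -
    obtain k' where k': "k = Suc k'" using k by (cases k) auto
    have dw: "(\<lambda>x j. wt k x j - w (k - 1) x j) = qp_step (gam k') (th k') (w k')"
      by (simp add: wt_def tentative_weights_def k')
    note wt = tentative_weights[where \<gamma>="gam k'", OF inv(3)[of k'] inv(1)[of k'] inv(2)[of k']]
    have "(th k, w k, gam k) = pgm_update \<eta> (th k', w k', gam k')"
      using state[of k] state[of k'] by (simp add: k' pgm_state_def)
    then show ?thesis
      unfolding Let_def dw
      using dGth_ok_near[OF inv(3)[of k'] in_ball_of_proj_radius[OF inv(1)[of k']]]
        qp_step_minimizes[where \<gamma>="gam k'", OF inv(3)[of k'] inv(1)[of k']]
        newton_seq_projection(1)[OF wt(1) inv(1) wt(2)]
      by (auto simp: k' wt_def tht_def pr_def pgm_update_def Let_def split: if_splits)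
  qed
  moreover have "\<not> stop k" if "enat k < T" for k using first_hitting_time(1)[OF T_def that] .
  moreover have "stop k" if "T = enat k" for k using first_hitting_time(2)[OF T_def that] .
  ultimately have "pgm_run P \<alpha> \<eta> \<epsilon> th w gam tht wt pr T"
    unfolding pgm_run_def stop_def using initial by blast
  then show ?thesis by blast
qed

context
  fixes \<eta> \<epsilon> th w gam tht wt pr T
  assumes run: "pgm_run P \<alpha> \<eta> \<epsilon> th w gam tht wt pr T"
begin

lemma initial_projection_bounds:
  "Vop P \<alpha> (pr 0 0) (w 0) \<le> g0\<^sup>2" "Vop P \<alpha> (pr 0 (Suc i)) (w 0) \<le> 3/4 * Vop P \<alpha> (pr 0 i) (w 0)"
  "Gop P \<alpha> (th 0) (w 0) = 0" "norm (th 0 - thm1 P) \<le> proj_radius"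
  using projection_bounds[OF _ _ Gop_initial_bound] pgm_run_initial[OF run] \<alpha>_pos CB_nonneg \<sigma>X_pos
  by (simp_all add: feasible_def proj_radius_def)

lemma iteration_projection_bounds:
  assumes k: "1 \<le> k" "enat k \<le> T" and prev: "norm (th (k - 1) - thm1 P) \<le> proj_radius"
    "Gop P \<alpha> (th (k - 1)) (w (k - 1)) = 0" "feasible P (w (k - 1))"
  shows "Vop P \<alpha> (pr k 0) (wt k) \<le> g0\<^sup>2" "Vop P \<alpha> (pr k (Suc i)) (wt k) \<le> 3/4 * Vop P \<alpha> (pr k i) (wt k)"
    "Gop P \<alpha> (tht k) (wt k) = 0" "norm (tht k - thm1 P) \<le> proj_radius"
proof -
  have "th (k - 1) \<in> Bl" using in_ball_of_proj_radius[OF prev(1)] ball_\<rho>0_subset_Bl by blast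
  note projection_bounds[OF pgm_run_iteration(1)[OF run k] prev(1)
      Gop_reweight_bound[OF prev(2,3) pgm_run_iteration(1)[OF run k] this] pgm_run_iteration(2)[OF run k]]
  then show "Vop P \<alpha> (pr k 0) (wt k) \<le> g0\<^sup>2" "Vop P \<alpha> (pr k (Suc i)) (wt k) \<le> 3/4 * Vop P \<alpha> (pr k i) (wt k)"
    "Gop P \<alpha> (tht k) (wt k) = 0" "norm (tht k - thm1 P) \<le> proj_radius"
    by blast+
qed

lemma pgm_run_invariant:
  "enat k \<le> T \<Longrightarrow> norm (th k - thm1 P) \<le> proj_radius \<and> Gop P \<alpha> (th k) (w k) = 0 \<and> feasible P (w k)"
proof (induction k)
  case 0
  then show ?case using initial_projection_bounds(3,4) pgm_run_initial(1)[OF run] by (simp add: feasible_def)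
next
  case (Suc k)
  then have "enat k \<le> T" using Suc_ile_eq order_less_imp_le by blast
  with Suc.IH have prev: "norm (th (Suc k - 1) - thm1 P) \<le> proj_radius"
    "Gop P \<alpha> (th (Suc k - 1)) (w (Suc k - 1)) = 0" "feasible P (w (Suc k - 1))"
    by auto
  note new = iteration_projection_bounds(3,4)[OF _ Suc.prems prev] pgm_run_iteration(1)[OF run _ Suc.prems]
  show ?case using pgm_run_iteration(3)[OF run _ Suc.prems] prev new by auto
qed

lemma pgm_run_bounds:
  assumes "enat k \<le> T"
  shows "Vop P \<alpha> (pr k 0) (proj_w w wt k) \<le> g0\<^sup>2"
    and "norm (th k - thm1 P) \<le> proj_radius"
    and "Vop P \<alpha> (pr k (Suc i)) (proj_w w wt k) \<le> 3/4 * Vop P \<alpha> (pr k i) (proj_w w wt k)"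
proof -
  show "norm (th k - thm1 P) \<le> proj_radius" using pgm_run_invariant[OF assms] by blast
  have "Vop P \<alpha> (pr k 0) (proj_w w wt k) \<le> g0\<^sup>2 \<and>
      (\<forall>i. Vop P \<alpha> (pr k (Suc i)) (proj_w w wt k) \<le> 3/4 * Vop P \<alpha> (pr k i) (proj_w w wt k))"
  proof (cases "k = 0")
    case True
    then show ?thesis using initial_projection_bounds(1,2) by (simp add: proj_w_def)
  next
    case False
    have "enat (k - 1) \<le> enat k" by simp
    then have k: "1 \<le> k" "enat (k - 1) \<le> T" using False order_trans[OF _ assms] by auto
    show ?thesis
      using iteration_projection_bounds(1,2)[OF k(1) assms] pgm_run_invariant[OF k(2)] False
      by (simp add: proj_w_def)
  qed
  then show "Vop P \<alpha> (pr k 0) (proj_w w wt k) \<le> g0\<^sup>2"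
    and "Vop P \<alpha> (pr k (Suc i)) (proj_w w wt k) \<le> 3/4 * Vop P \<alpha> (pr k i) (proj_w w wt k)"
    by blast+
qed

end

lemma pgm_guarantee:
  assumes "proj_radius \<le> \<rho>"
  shows "pgm_guarantee P \<alpha> \<eta> \<epsilon> \<rho> (g0\<^sup>2)"
  unfolding pgm_guarantee_def
proof (intro conjI allI impI pgm_run_exists)
  fix th w gam tht wt pr T k i
  assume run: "pgm_run P \<alpha> \<eta> \<epsilon> th w gam tht wt pr T" and k: "enat k \<le> T"
  note bounds = pgm_run_bounds[OF run k]
  show "Vop P \<alpha> (pr k 0) (proj_w w wt k) \<le> g0\<^sup>2" by (rule bounds(1))
  show "th k \<in> cball (thm1 P) \<rho>" using bounds(2) assms by (simp add: dist_norm norm_minus_commute)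
  show "Vop P \<alpha> (pr k (Suc i)) (proj_w w wt k) \<le> 3/4 * Vop P \<alpha> (pr k i) (proj_w w wt k)"
    by (rule bounds(3))
qed

end

section \<open>Choice of the constants\<close>

lemma exists_radius_below:
  fixes C \<sigma> :: real
  assumes "C \<ge> 0" and "\<sigma> > 0"
  shows "\<exists>\<rho>. 0 < \<rho> \<and> \<rho> \<le> 1 \<and> C * \<rho> \<le> \<sigma> / 2"
proof -
  define \<rho> where "\<rho> = min 1 (\<sigma> / (2 * (C + 1)))"
  have "C * \<rho> \<le> (C + 1) * (\<sigma> / (2 * (C + 1)))"
    using assms by (intro mult_mono) (auto simp: \<rho>_def)
  also have "\<dots> = \<sigma> / 2" using assms by (simp add: field_simps)
  finally have "C * \<rho> \<le> \<sigma> / 2" .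
  moreover have "0 < \<rho>" "\<rho> \<le> 1" using assms by (simp_all add: \<rho>_def)
  ultimately show ?thesis by blast
qed

lemma step_size_exists:
  fixes CA CB \<sigma>X \<rho>0 g0 \<beta> :: real
  assumes "CA \<ge> 0" "CB \<ge> 0" "\<sigma>X > 0" "\<rho>0 > 0" "g0 > 0" "\<beta> > 0"
  shows "\<exists>\<alpha>3>0. \<forall>\<alpha>. 0 < \<alpha> \<and> \<alpha> \<le> \<alpha>3 \<longrightarrow>
    \<alpha> * (4 * (CB + 1)) \<le> \<sigma>X \<and> 32 * (CA + CB) * g0 * \<alpha> \<le> \<sigma>X\<^sup>2 \<and>
    \<alpha> * (2 * CB + 8 * g0) < \<rho>0 * \<sigma>X \<and> 2 * \<alpha> * CB / \<sigma>X \<le> \<beta> / 2"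
proof -
  define \<alpha>3 where "\<alpha>3 = min (min (\<sigma>X / (4 * (CB + 1))) (\<sigma>X\<^sup>2 / (32 * (CA + CB + 1) * g0)))
      (min (\<rho>0 * \<sigma>X / (2 * (2 * CB + 8 * g0 + 1))) (\<beta> * \<sigma>X / (4 * (CB + 1))))"
  have "\<alpha> * (4 * (CB + 1)) \<le> \<sigma>X \<and> 32 * (CA + CB) * g0 * \<alpha> \<le> \<sigma>X\<^sup>2 \<and>
      \<alpha> * (2 * CB + 8 * g0) < \<rho>0 * \<sigma>X \<and> 2 * \<alpha> * CB / \<sigma>X \<le> \<beta> / 2"
    if \<alpha>: "0 < \<alpha>" "\<alpha> \<le> \<alpha>3" for \<alpha>
  proof (intro conjI)
    have a: "\<alpha> \<le> \<sigma>X / (4 * (CB + 1))" "\<alpha> \<le> \<sigma>X\<^sup>2 / (32 * (CA + CB + 1) * g0)"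
      "\<alpha> \<le> \<rho>0 * \<sigma>X / (2 * (2 * CB + 8 * g0 + 1))" "\<alpha> \<le> \<beta> * \<sigma>X / (4 * (CB + 1))"
      using \<alpha> by (auto simp: \<alpha>3_def)
    show "\<alpha> * (4 * (CB + 1)) \<le> \<sigma>X" using a(1) assms by (simp add: field_simps)
    have "32 * (CA + CB) * g0 * \<alpha> \<le> 32 * (CA + CB + 1) * g0 * \<alpha>"
      using \<alpha> assms by (intro mult_right_mono) auto
    also have "\<dots> \<le> \<sigma>X\<^sup>2"
    proof -
      have pos: "32 * (CA + CB + 1) * g0 > 0" using assms by simp
      from a(2) have "\<alpha> * (32 * (CA + CB + 1) * g0) \<le> \<sigma>X\<^sup>2" by (simp only: pos_le_divide_eq[OF pos])
      then show ?thesis by (simp add: algebra_simps)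
    qed
    finally show "32 * (CA + CB) * g0 * \<alpha> \<le> \<sigma>X\<^sup>2" .
    have "\<alpha> * (2 * CB + 8 * g0) < \<alpha> * (2 * (2 * CB + 8 * g0 + 1))"
      using \<alpha> assms by (intro mult_strict_left_mono) auto
    also have "\<dots> \<le> \<rho>0 * \<sigma>X" using a(3) assms by (simp add: field_simps)
    finally show "\<alpha> * (2 * CB + 8 * g0) < \<rho>0 * \<sigma>X" .
    have "2 * \<alpha> * CB * 2 \<le> \<alpha> * (4 * (CB + 1))" using \<alpha> by (simp add: algebra_simps)
    also have "\<dots> \<le> \<beta> * \<sigma>X" using a(4) assms by (simp add: field_simps)
    finally show "2 * \<alpha> * CB / \<sigma>X \<le> \<beta> / 2" using assms by (simp add: field_simps)
  qed
  moreover have "\<alpha>3 > 0" using assms by (simp add: \<alpha>3_def)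
  ultimately show ?thesis by blast
qed

context robot_nondegenerate
begin

lemma pgm_guarantee_for_small_steps:
  "\<exists>r>0. \<exists>MV>0. \<forall>\<beta>. 0 < \<beta> \<and> \<beta> \<le> 1 \<longrightarrow>
     (\<exists>\<alpha>3>0. \<forall>\<alpha>. 0 < \<alpha> \<and> \<alpha> \<le> \<alpha>3 \<and> \<alpha> \<le> 1 \<longrightarrow> pgm_guarantee P \<alpha> \<eta> \<epsilon> (r * \<beta> / 2) MV)"
proof -
  obtain CA where CA: "C11_on Bl (Aop P) dA CA" using Aop_C11 by blast
  obtain CB where CB: "\<And>w. feasible P w \<Longrightarrow> C11_on Bl (\<lambda>t. Bop P t w) (\<lambda>t v. dB t v - dF w t v) CB"
    "\<And>w t. feasible P w \<Longrightarrow> t \<in> Bl \<Longrightarrow> norm (Fc P t w) \<le> CB"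
    using Bop_C11 by blast
  have CA0: "CA \<ge> 0" and CB0: "CB \<ge> 0"
    using uniform_C11_nonneg[OF CA] uniform_C11_nonneg[OF CB(1)[of "\<lambda>x j. 0"]] by (simp_all add: feasible_def)
  obtain \<rho>0 where \<rho>0: "0 < \<rho>0" "\<rho>0 \<le> 1" "CA * \<rho>0 \<le> \<sigma>X / 2"
    using exists_radius_below[OF CA0 \<sigma>X_pos] by blast
  define g0 where "g0 = 2 * CB + 1"
  have g0: "0 < g0" "2 * CB \<le> g0" using CB0 by (simp_all add: g0_def)
  have "\<exists>\<alpha>3>0. \<forall>\<alpha>. 0 < \<alpha> \<and> \<alpha> \<le> \<alpha>3 \<and> \<alpha> \<le> 1 \<longrightarrow> pgm_guarantee P \<alpha> \<eta> \<epsilon> (1 * \<beta> / 2) (g0\<^sup>2)"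
    if \<beta>_pos: "0 < \<beta>" for \<beta>
  proof -
    obtain \<alpha>3 where "\<alpha>3 > 0" and cond: "\<And>\<alpha>. 0 < \<alpha> \<Longrightarrow> \<alpha> \<le> \<alpha>3 \<Longrightarrow>
        \<alpha> * (4 * (CB + 1)) \<le> \<sigma>X \<and> 32 * (CA + CB) * g0 * \<alpha> \<le> \<sigma>X\<^sup>2 \<and>
        \<alpha> * (2 * CB + 8 * g0) < \<rho>0 * \<sigma>X \<and> 2 * \<alpha> * CB / \<sigma>X \<le> \<beta> / 2"
      using step_size_exists[OF CA0 CB0 \<sigma>X_pos \<rho>0(1) g0(1) \<beta>_pos] by blast
    moreover have "pgm_guarantee P \<alpha> \<eta> \<epsilon> (1 * \<beta> / 2) (g0\<^sup>2)" if \<alpha>: "0 < \<alpha>" "\<alpha> \<le> \<alpha>3" "\<alpha> \<le> 1" for \<alpha>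
    proof -
      note cond = cond[OF \<alpha>(1,2)]
      interpret small_step P U B\<rho> \<sigma>X CA CB \<rho>0 g0 \<alpha>
        by unfold_locales (use CA CB \<rho>0 g0 \<alpha> cond in auto)
      show ?thesis by (rule pgm_guarantee) (use cond in \<open>simp add: proj_radius_def\<close>)
    qed
    ultimately show ?thesis by blast
  qed
  moreover have "0 < g0\<^sup>2" using g0 by simp
  ultimately show ?thesis using zero_less_one by blast
qed

end

theorem theorem4:
  fixes P :: "('n::finite) robot" and \<eta> \<epsilon> \<sigma>X :: real
  assumes R_compact: "compact (rR P)"
    and rho_meas: "rho P measurable_on rR P"
    and rho_bdd: "\<exists>B. \<forall>x\<in>rR P. rho P x \<le> B"
    and rho_pos: "\<forall>x\<in>rR P. rho P x > 0"
    and C_fin: "finite (rC P)" and C_sub: "rC P \<subseteq> rR P"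
    and dt_pos: "dt P > 0"
    and eta: "\<eta> > 1" and eps: "\<epsilon> > 0"
    and A1: "\<exists>U. rR P \<times> UNIV \<subseteq> U \<and> smooth_on U (\<lambda>p. rX P (fst p) (snd p))"
    and A2: "\<sigma>X > 0 \<and>
       sigma_min (integral (rR P) (\<lambda>x. (rho P x / (dt P)\<^sup>2) *\<^sub>R
          (transpose (DX P x (thm1 P)) ** DX P x (thm1 P)))) \<ge> \<sigma>X"
    and A3: "\<forall>x\<in>rC P. \<forall>j<rV P x. Ck_on 3 UNIV (\<lambda>\<theta>. rv P x \<theta> j)"
  shows "\<exists>r>0. \<exists>MV>0. \<forall>\<beta>. 0 < \<beta> \<and> \<beta> \<le> 1 \<longrightarrow> (\<exists>\<alpha>3>0. \<forall>\<alpha>. 0 < \<alpha> \<and> \<alpha> \<le> \<alpha>3 \<and> \<alpha> \<le> 1 \<longrightarrow>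
     (\<exists>th w gam tht wt pr T. pgm_run P \<alpha> \<eta> \<epsilon> th w gam tht wt pr T) \<and>
     (\<forall>th w gam tht wt pr T. pgm_run P \<alpha> \<eta> \<epsilon> th w gam tht wt pr T \<longrightarrow>
        (\<forall>k. enat k \<le> T \<longrightarrow>
           Vop P \<alpha> (pr k 0) (proj_w w wt k) \<le> MV \<and>
           th k \<in> cball (thm1 P) (r * \<beta> / 2) \<and>
           (\<forall>i. Vop P \<alpha> (pr k (Suc i)) (proj_w w wt k) \<le> 3/4 * Vop P \<alpha> (pr k i) (proj_w w wt k)))))"
proof -
  obtain U where "rR P \<times> UNIV \<subseteq> U" and "smooth_on U (\<lambda>p. rX P (fst p) (snd p))" using A1 by blast
  moreover obtain B where "\<forall>x\<in>rR P. rho P x \<le> B" using rho_bdd by blast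
  ultimately interpret robot_nondegenerate P U B \<sigma>X
    by unfold_locales (use R_compact rho_meas rho_pos C_fin C_sub dt_pos A2 A3 in auto)
  show ?thesis using pgm_guarantee_for_small_steps unfolding pgm_guarantee_def .
qed

end
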